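(* Let $\Lambda$ be an irreducible root lattice of dimension $n$, i.e. $\Lambda$ is isometric to one of $\mathbb A_n$ ($n\ge1$), $\mathbb D_n$ ($n\ge4$), $\mathbb E_6,\mathbb E_7,\mathbb E_8$. Let $x_0$ be any vector of norm $2$ in $\Lambda$ and let $\mathcal E$ be the set of vectors $y\in\Lambda$ of norm $6$ with $y-x_0\in2\Lambda$. Then the linear span of $\mathcal E$ has dimension $r=n-1$, and the number $t$ of lines $\mathbb Ry$, $y\in\mathcal E$ (which form an equiangular family with angle $\arccos\frac13$), is: $t=r$ if $\Lambda=\mathbb A_n$; $t=2r-2$ if $\Lambda=\mathbb D_n$; $t=28$ if $\Lambda=\mathbb E_8$; $t=16$ if $\Lambda=\mathbb E_7$; $t=10$ if $\Lambda=\mathbb E_6$.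
   Context: With $(\varepsilon_i)$ the canonical basis: $\mathbb A_n=\{x\in\mathbb Z^{n+1}:\sum_{i=0}^n x_i=0\}$; $\mathbb D_n=\{x\in\mathbb Z^n:\sum_{i=1}^n x_i\equiv0\pmod 2\}$; $\mathbb E_8=\mathbb D_8\cup(\mathbb D_8+e)$ with $e=\frac12(\varepsilon_1+\dots+\varepsilon_8)$; $\mathbb E_7=\{x\in\mathbb E_8: x\cdot(\varepsilon_7-\varepsilon_8)=0\}$ and $\mathbb E_6=\{x\in\mathbb E_7:x\cdot(\varepsilon_6-\varepsilon_7)=0\}$. Each is regarded as a lattice in its real span; the dimension $n$ of $\mathbb A_n$ is $n$. Norm means $N(x)=x\cdot x$; these lattices are even with minimum $2$. *)

theory Defs
  imports "HOL-Analysis.Analysis" "HOL-Library.Numeral_Type"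
begin

text \<open>Vectors of R^m are modelled as real^'m for a finite index type 'm.
  The coordinates epsilon_1..epsilon_8 of R^8 correspond to the indices 0..7 of type 8.\<close>

definition int_vec :: "real^'m \<Rightarrow> bool" where
  "int_vec x \<longleftrightarrow> (\<forall>i. x $ i \<in> \<int>)"

text \<open>A_n inside R^(n+1), where n+1 = CARD('m).\<close>
definition A_lat :: "(real^'m) set" where
  "A_lat = {x. int_vec x \<and> (\<Sum>i\<in>UNIV. x $ i) = 0}"

text \<open>D_n inside R^n, where n = CARD('m).\<close>
definition D_lat :: "(real^'m) set" where
  "D_lat = {x. int_vec x \<and> (\<exists>k\<in>\<int>. (\<Sum>i\<in>UNIV. x $ i) = 2 * k)}"

definition e_half :: "real^8" where
  "e_half = (\<chi> i. 1/2)"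

definition E8_lat :: "(real^8) set" where
  "E8_lat = D_lat \<union> {x + e_half | x. x \<in> D_lat}"

definition E7_lat :: "(real^8) set" where
  "E7_lat = {x \<in> E8_lat. x \<bullet> (axis 6 1 - axis 7 1) = 0}"

definition E6_lat :: "(real^8) set" where
  "E6_lat = {x \<in> E7_lat. x \<bullet> (axis 5 1 - axis 6 1) = 0}"

definition Nrm :: "real^'m \<Rightarrow> real" where
  "Nrm x = x \<bullet> x"

definition Eset :: "(real^'m) set \<Rightarrow> real^'m \<Rightarrow> (real^'m) set" where
  "Eset L x0 = {y \<in> L. Nrm y = 6 \<and> y - x0 \<in> (\<lambda>z. 2 *\<^sub>R z) ` L}"

definition lines_of :: "(real^'m) set \<Rightarrow> (real^'m) set set" where
  "lines_of E = (\<lambda>y. span {y}) ` E"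

definition prop_holds :: "(real^'m) set \<Rightarrow> nat \<Rightarrow> nat \<Rightarrow> bool" where
  "prop_holds L r t \<longleftrightarrow>
     (\<forall>x0\<in>L. Nrm x0 = 2 \<longrightarrow>
        dim (span (Eset L x0)) = r \<and>
        card (lines_of (Eset L x0)) = t \<and>
        (\<forall>y\<in>Eset L x0. \<forall>y'\<in>Eset L x0. span {y} \<noteq> span {y'} \<longrightarrow>
            \<bar>y \<bullet> y'\<bar> = (1/3) * (norm y * norm y')))"

end

theory Submission
  imports Defs
begin

text \<open>
  If \<open>y \<in> E\<close>, then \<open>z = (y - x\<^sub>0)/2\<close> is a root with \<open>z \<bullet> x\<^sub>0 = -1\<close>: integrality and Cauchy--Schwarz
  leave no other possibility, so \<open>E = x\<^sub>0 + 2R\<close> with \<open>R\<close> the roots at angle \<open>2\<pi>/3\<close> to \<open>x\<^sub>0\<close>.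
  For two such roots \<open>z \<noteq> z'\<close> the integer \<open>z \<bullet> z'\<close> lies in \<open>{-1, 0, 1}\<close>, so
  \<open>y \<bullet> y' = \<plusminus>2 = \<plusminus>|y| |y'|/3\<close> unless \<open>y' = -y\<close>.

  A reflection in a root preserves the lattice and maps \<open>E(x\<^sub>0)\<close> onto \<open>E\<close> of the reflected root,
  so the dimension of \<open>span E\<close> and the number of lines agree for roots with inner product \<open>\<plusminus>1\<close>,
  and hence for roots joined by a chain of such.  For \<open>A\<^sub>n\<close> and \<open>D\<^sub>n\<close> both numbers are computed
  at every root; in \<open>E\<^sub>6, E\<^sub>7, E\<^sub>8\<close> every root is joined to \<open>\<epsilon>\<^sub>1 + \<epsilon>\<^sub>2\<close>, where \<open>E\<close> is listed
  explicitly.  In each case \<open>E = P \<union> -P\<close> for an explicit \<open>P\<close> meeting every line once, and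
  \<open>span P\<close> has an evident orthogonal basis.
\<close>

section \<open>Even lattices and the set \<open>E\<close>\<close>

definition even_lattice :: "(real^'m) set \<Rightarrow> bool" where
  "even_lattice L \<longleftrightarrow> 0 \<in> L \<and> (\<forall>x\<in>L. \<forall>y\<in>L. x + y \<in> L) \<and> (\<forall>x\<in>L. -x \<in> L)
     \<and> (\<forall>x\<in>L. \<forall>y\<in>L. x \<bullet> y \<in> \<int>) \<and> (\<forall>x\<in>L. x \<bullet> x / 2 \<in> \<int>)"

lemma even_lattice_zero: "even_lattice L \<Longrightarrow> 0 \<in> L"
  and even_lattice_add: "even_lattice L \<Longrightarrow> x \<in> L \<Longrightarrow> y \<in> L \<Longrightarrow> x + y \<in> L"
  and even_lattice_minus: "even_lattice L \<Longrightarrow> x \<in> L \<Longrightarrow> -x \<in> L"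
  and even_lattice_inner: "even_lattice L \<Longrightarrow> x \<in> L \<Longrightarrow> y \<in> L \<Longrightarrow> x \<bullet> y \<in> \<int>"
  and even_lattice_half_norm: "even_lattice L \<Longrightarrow> x \<in> L \<Longrightarrow> x \<bullet> x / 2 \<in> \<int>"
  by (simp_all add: even_lattice_def)

lemma even_lattice_diff: "even_lattice L \<Longrightarrow> x \<in> L \<Longrightarrow> y \<in> L \<Longrightarrow> x - y \<in> L"
  using even_lattice_add[of L x "-y"] even_lattice_minus[of L y] by simp

lemma even_lattice_scaleR_int:
  assumes L: "even_lattice L" and x: "x \<in> L" and c: "c \<in> \<int>"
  shows "c *\<^sub>R x \<in> L"
proof -
  have nat: "of_nat n *\<^sub>R x \<in> L" for n
    by (induction n) (simp_all add: algebra_simps even_lattice_zero[OF L] even_lattice_add[OF L x])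
  obtain k where "c = of_int k" using c Ints_cases by blast
  then show ?thesis
    using nat[of "nat k"] even_lattice_minus[OF L nat[of "nat (-k)"]] by (cases "k \<ge> 0") simp_all
qed

lemma even_lattice_orthogonal_sublattice: "even_lattice L \<Longrightarrow> even_lattice {x\<in>L. x \<bullet> a = 0}"
  unfolding even_lattice_def by (auto simp: inner_add_left)

lemma inner_cases_if_integral:
  fixes u v :: "'a::real_inner"
  assumes uv: "u \<bullet> v \<in> \<int>" and u: "u \<bullet> u = 2" and v: "v \<bullet> v = 2"
  obtains "v = u" | "v = -u" | "u \<bullet> v \<in> {-1, 0, 1}"
proof -
  obtain k where k: "u \<bullet> v = of_int k" using uv Ints_cases by blast
  have "(of_int k)\<^sup>2 \<le> (2::real)\<^sup>2" using Cauchy_Schwarz_ineq[of u v] u v k by simp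
  then have "\<bar>k\<bar> \<le> 2" using abs_le_square_iff[of "of_int k :: real" 2] by simp
  then consider "k = 2" | "k = -2" | "k \<in> {-1, 0, 1}" by force
  then show thesis
  proof cases
    case 1
    then have "(u - v) \<bullet> (u - v) = 0" using u v k by (simp add: algebra_simps inner_commute)
    then show thesis using that(1) by simp
  next
    case 2
    then have "(u + v) \<bullet> (u + v) = 0" using u v k by (simp add: algebra_simps inner_commute)
    then show thesis using that(2) by (simp add: add_eq_0_iff)
  next
    case 3
    then show thesis using that(3) k by auto
  qed
qed

definition obtuse_roots :: "(real^'m) set \<Rightarrow> real^'m \<Rightarrow> (real^'m) set" where
  "obtuse_roots L x0 = {z \<in> L. z \<bullet> z = 2 \<and> z \<bullet> x0 = -1}"

lemma norm_shifted_root: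
  "(x0 + 2 *\<^sub>R z) \<bullet> (x0 + 2 *\<^sub>R z) = x0 \<bullet> x0 + 4 * (z \<bullet> x0) + 4 * (z \<bullet> z)"
  by (simp add: algebra_simps inner_commute)

lemma Eset_eq_obtuse_roots:
  assumes L: "even_lattice L" and x0: "x0 \<in> L" "x0 \<bullet> x0 = 2"
  shows "Eset L x0 = (\<lambda>z. x0 + 2 *\<^sub>R z) ` obtuse_roots L x0"
proof (intro equalityI subsetI)
  fix y assume "y \<in> Eset L x0"
  then obtain z where y: "y \<bullet> y = 6" and z: "z \<in> L" and "y - x0 = 2 *\<^sub>R z"
    by (auto simp: Eset_def Nrm_def)
  then have yz: "y = x0 + 2 *\<^sub>R z" by (simp add: algebra_simps)
  have sum: "z \<bullet> x0 + z \<bullet> z = 1" using y x0 norm_shifted_root[of x0 z] by (simp add: yz)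
  obtain m where "z \<bullet> z / 2 = of_int m"
    using even_lattice_half_norm[OF L z] Ints_cases by blast
  then have m: "z \<bullet> z = 2 * of_int m" by simp
  then have zx0: "z \<bullet> x0 = 1 - 2 * of_int m" using sum by linarith
  \<comment> \<open>Cauchy--Schwarz: \<open>(1 - 2m)\<^sup>2 \<le> 4m\<close> forces \<open>m = 1\<close>\<close>
  have "(1 - 2 * of_int m)\<^sup>2 \<le> 2 * of_int m * (2::real)"
    using Cauchy_Schwarz_ineq[of z x0] unfolding zx0 m x0(2) .
  then have "of_int ((2 * m - 2)\<^sup>2) \<le> (of_int 3 :: real)"
    by (simp add: power2_eq_square algebra_simps)
  then have "(2 * m - 2)\<^sup>2 \<le> 3" by linarith
  then have "\<not> 2 \<le> \<bar>2 * m - 2\<bar>" using abs_le_square_iff[of 2 "2 * m - 2"] by simp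
  then have "m = 1" by arith
  then show "y \<in> (\<lambda>z. x0 + 2 *\<^sub>R z) ` obtuse_roots L x0"
    using sum m z yz by (auto simp: obtuse_roots_def)
next
  fix y assume "y \<in> (\<lambda>z. x0 + 2 *\<^sub>R z) ` obtuse_roots L x0"
  then obtain z where z: "z \<in> L" "z \<bullet> z = 2" "z \<bullet> x0 = -1" and yz: "y = x0 + 2 *\<^sub>R z"
    by (auto simp: obtuse_roots_def)
  have "y \<in> L" using yz even_lattice_add[OF L x0(1) even_lattice_add[OF L z(1) z(1)]]
    by (simp add: scaleR_2)
  then show "y \<in> Eset L x0"
    using z x0 norm_shifted_root[of x0 z] by (auto simp: Eset_def Nrm_def yz)
qed

lemma span_singleton_uminus: "span {- y} = span {y}"
proof -
  have "- y \<in> span {y}" "y \<in> span {- y}"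
    using span_neg[OF span_base, of y "{y}"] span_neg[OF span_base, of "- y" "{- y}"] by auto
  then show ?thesis by (simp add: span_eq)
qed

lemma Eset_equiangular:
  assumes L: "even_lattice L" and x0: "x0 \<in> L" "x0 \<bullet> x0 = 2"
    and y: "y \<in> Eset L x0" and y': "y' \<in> Eset L x0" and lines: "span {y} \<noteq> span {y'}"
  shows "\<bar>y \<bullet> y'\<bar> = (1/3) * (norm y * norm y')"
proof -
  obtain z where z: "z \<in> L" "z \<bullet> z = 2" "z \<bullet> x0 = -1" and yz: "y = x0 + 2 *\<^sub>R z"
    using y unfolding Eset_eq_obtuse_roots[OF L x0] by (auto simp: obtuse_roots_def)
  obtain z' where z': "z' \<in> L" "z' \<bullet> z' = 2" "z' \<bullet> x0 = -1" and yz': "y' = x0 + 2 *\<^sub>R z'"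
    using y' unfolding Eset_eq_obtuse_roots[OF L x0] by (auto simp: obtuse_roots_def)
  have "y \<bullet> y = 6" "y' \<bullet> y' = 6"
    using x0 z z' norm_shifted_root[of x0 z] norm_shifted_root[of x0 z'] by (simp_all add: yz yz')
  then have norms: "norm y * norm y' = 6"
    by (simp add: norm_eq_sqrt_inner real_sqrt_mult[symmetric])
  have yy': "y \<bullet> y' = 4 * (z \<bullet> z') - 2"
    using x0 z z' by (simp add: yz yz' algebra_simps inner_commute)
  from inner_cases_if_integral[OF even_lattice_inner[OF L z(1) z'(1)] z(2) z'(2)]
  have "\<bar>y \<bullet> y'\<bar> = 2"
  proof cases
    case 1
    then show ?thesis using lines by (simp add: yz yz')
  next
    case 2
    then show ?thesis using z z' by simp
  next
    case 3
    moreover have "z \<bullet> z' \<noteq> -1"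
    proof
      assume "z \<bullet> z' = -1"
      then have "(z + z' + x0) \<bullet> (z + z' + x0) = 0"
        using z z' x0 by (simp add: algebra_simps inner_commute)
      then have "z + z' + x0 = 0" by simp
      moreover have "y' + y = 2 *\<^sub>R (z + z' + x0)" by (simp add: yz yz' algebra_simps scaleR_2)
      ultimately have "y' = - y" by (simp add: eq_neg_iff_add_eq_0)
      then show False using lines span_singleton_uminus[of y] by simp
    qed
    ultimately show ?thesis using yy' by auto
  qed
  then show ?thesis using norms by simp
qed

text \<open>Only for \<open>r \<bullet> r = 2\<close> is this the orthogonal reflection in the hyperplane \<open>r\<^sup>\<bottom>\<close>.\<close>
definition reflection :: "real^'m \<Rightarrow> real^'m \<Rightarrow> real^'m" where
  "reflection r x = x - (x \<bullet> r) *\<^sub>R r"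

lemma linear_reflection: "linear (reflection r)"
  by (rule linearI) (simp_all add: reflection_def algebra_simps inner_add_left)

lemma inner_reflection: "r \<bullet> r = 2 \<Longrightarrow> reflection r x \<bullet> reflection r y = x \<bullet> y"
  by (simp add: reflection_def algebra_simps inner_commute)

lemma reflection_reflection: "r \<bullet> r = 2 \<Longrightarrow> reflection r (reflection r x) = x"
  by (simp add: reflection_def algebra_simps inner_commute)

lemma inj_reflection: "r \<bullet> r = 2 \<Longrightarrow> inj (reflection r)"
  by (metis injI reflection_reflection)

lemma reflection_in_lattice: "even_lattice L \<Longrightarrow> r \<in> L \<Longrightarrow> x \<in> L \<Longrightarrow> reflection r x \<in> L"
  unfolding reflection_def
  by (intro even_lattice_diff even_lattice_scaleR_int even_lattice_inner) auto

lemma reflection_image_Eset_subset: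
  assumes L: "even_lattice L" and r: "r \<in> L" "r \<bullet> r = 2"
  shows "reflection r ` Eset L x0 \<subseteq> Eset L (reflection r x0)"
proof
  fix y' assume "y' \<in> reflection r ` Eset L x0"
  then obtain y z where y: "y \<in> L" "Nrm y = 6" and z: "z \<in> L" "y - x0 = 2 *\<^sub>R z"
    and y': "y' = reflection r y"
    by (auto simp: Eset_def)
  have "reflection r y - reflection r x0 = 2 *\<^sub>R reflection r z"
    using z(2) linear_reflection[of r]
    by (metis linear_diff linear_cmul)
  then show "y' \<in> Eset L (reflection r x0)"
    using y z reflection_in_lattice[OF L r(1)] inner_reflection[OF r(2)]
    by (auto simp: Eset_def Nrm_def y')
qed

lemma Eset_reflection:
  assumes L: "even_lattice L" and r: "r \<in> L" "r \<bullet> r = 2"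
  shows "Eset L (reflection r x0) = reflection r ` Eset L x0"
proof
  show "reflection r ` Eset L x0 \<subseteq> Eset L (reflection r x0)"
    by (rule reflection_image_Eset_subset[OF assms])
  have "reflection r ` Eset L (reflection r x0) \<subseteq> Eset L x0"
    using reflection_image_Eset_subset[OF assms, of "reflection r x0"] reflection_reflection[OF r(2)]
    by simp
  then have "reflection r ` reflection r ` Eset L (reflection r x0) \<subseteq> reflection r ` Eset L x0"
    by blast
  then show "Eset L (reflection r x0) \<subseteq> reflection r ` Eset L x0"
    using reflection_reflection[OF r(2)] by (simp add: image_image)
qed

lemma Eset_uminus:
  assumes L: "even_lattice L" and x0: "x0 \<in> L" and y: "y \<in> Eset L x0"
  shows "- y \<in> Eset L x0"
proof -
  obtain z where z: "z \<in> L" "y - x0 = 2 *\<^sub>R z" using y by (auto simp: Eset_def)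
  then have "- y - x0 = 2 *\<^sub>R (- z - x0)" by (simp add: algebra_simps scaleR_2)
  moreover have "- z - x0 \<in> L" using L x0 z(1) by (simp add: even_lattice_diff even_lattice_minus)
  ultimately show ?thesis using y even_lattice_minus[OF L] by (auto simp: Eset_def Nrm_def)
qed

definition Eset_invariants :: "(real^'m) set \<Rightarrow> real^'m \<Rightarrow> nat \<times> nat" where
  "Eset_invariants L x0 = (dim (span (Eset L x0)), card (lines_of (Eset L x0)))"

lemma Eset_invariants_reflection:
  assumes L: "even_lattice L" and r: "r \<in> L" "r \<bullet> r = 2"
  shows "Eset_invariants L (reflection r x0) = Eset_invariants L x0"
proof -
  let ?f = "reflection r" and ?E = "Eset L x0"
  have "dim (?f ` ?E) = dim ?E"
    using dim_image_eq[OF linear_reflection inj_on_subset[OF inj_reflection[OF r(2)]]] by blast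
  moreover have "lines_of (?f ` ?E) = (\<lambda>l. ?f ` l) ` lines_of ?E"
    unfolding lines_of_def image_image
    by (rule image_cong) (auto simp: linear_span_image[OF linear_reflection, symmetric])
  moreover have "inj (\<lambda>l. ?f ` l)"
    using inj_reflection[OF r(2)] by (simp add: inj_def inj_image_eq_iff)
  ultimately show ?thesis
    by (simp add: Eset_invariants_def Eset_reflection[OF assms] card_image inj_on_subset)
qed

lemma Eset_invariants_uminus:
  assumes L: "even_lattice L" and u: "u \<in> L" "u \<bullet> u = 2"
  shows "Eset_invariants L (- u) = Eset_invariants L u"
proof -
  have "reflection u u = - u" using u(2) by (simp add: reflection_def scaleR_2)
  then show ?thesis using Eset_invariants_reflection[OF L u] by metis
qed

lemma Eset_invariants_adjacent_roots:
  assumes L: "even_lattice L" and u: "u \<in> L" "u \<bullet> u = 2" and v: "v \<in> L" "v \<bullet> v = 2"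
    and uv: "\<bar>u \<bullet> v\<bar> = 1"
  shows "Eset_invariants L v = Eset_invariants L u"
proof -
  \<comment> \<open>\<open>u \<bullet> w = 1\<close> makes \<open>u - w\<close> a root whose reflection maps \<open>u\<close> to \<open>w\<close>\<close>
  have reflect: "Eset_invariants L w = Eset_invariants L u"
    if w: "w \<in> L" "w \<bullet> w = 2" "u \<bullet> w = 1" for w
  proof -
    have "(u - w) \<bullet> (u - w) = 2" using u w by (simp add: algebra_simps inner_commute)
    moreover have "reflection (u - w) u = w" using u w by (simp add: reflection_def algebra_simps)
    ultimately show ?thesis
      using Eset_invariants_reflection[OF L even_lattice_diff[OF L u(1) w(1)]] by metis
  qed
  show ?thesis
  proof (cases "u \<bullet> v = 1")
    case True
    then show ?thesis using reflect v by blast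
  next
    case False
    then have "Eset_invariants L (- v) = Eset_invariants L u"
      using reflect[of "- v"] even_lattice_minus[OF L v(1)] uv v by auto
    then show ?thesis using Eset_invariants_uminus[OF L v] by simp
  qed
qed

lemma Eset_invariants_eq_roots:
  assumes L: "even_lattice L" and u: "u \<in> L" "u \<bullet> u = 2" and v: "v \<in> L" "v \<bullet> v = 2"
    and common_neighbour: "u \<bullet> v = 0 \<Longrightarrow> \<exists>w\<in>L. w \<bullet> w = 2 \<and> \<bar>w \<bullet> u\<bar> = 1 \<and> \<bar>w \<bullet> v\<bar> = 1"
  shows "Eset_invariants L v = Eset_invariants L u"
  using inner_cases_if_integral[OF even_lattice_inner[OF L u(1) v(1)] u(2) v(2)]
proof cases
  case 1
  then show ?thesis by simp
next
  case 2
  then show ?thesis using Eset_invariants_uminus[OF L u] by simp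
next
  case 3
  show ?thesis
  proof (cases "u \<bullet> v = 0")
    case True
    then obtain w where w: "w \<in> L" "w \<bullet> w = 2" "\<bar>w \<bullet> u\<bar> = 1" "\<bar>w \<bullet> v\<bar> = 1"
      using common_neighbour by blast
    then show ?thesis
      using Eset_invariants_adjacent_roots[OF L u w(1,2)] Eset_invariants_adjacent_roots[OF L w(1,2) v]
      by (simp add: inner_commute)
  next
    case False
    then show ?thesis using 3 Eset_invariants_adjacent_roots[OF L u v] by auto
  qed
qed

lemma span_eq_half_system:
  assumes "P \<subseteq> E" "E \<subseteq> P \<union> uminus ` P"
  shows "span E = span P"
proof -
  have "E \<subseteq> span P"
  proof
    fix y assume "y \<in> E"
    then have "y \<in> P \<or> - y \<in> P" using assms(2) by force
    then show "y \<in> span P" by (metis span_base span_neg minus_minus)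
  qed
  then show ?thesis using assms(1) by (simp add: span_eq span_base subset_iff)
qed

lemma in_span_if_add_diff_in:
  fixes a c :: "'a::real_vector"
  assumes "a + c \<in> P" "a - c \<in> P"
  shows "a \<in> span P" "c \<in> span P"
proof -
  have "(a + c) + (a - c) = 2 *\<^sub>R a" "(a + c) - (a - c) = 2 *\<^sub>R c"
    by (simp_all add: scaleR_2 algebra_simps)
  then have "2 *\<^sub>R a \<in> span P" "2 *\<^sub>R c \<in> span P"
    by (metis assms span_add span_diff span_base)+
  from span_scale[OF this(1), of "1/2"] span_scale[OF this(2), of "1/2"]
  show "a \<in> span P" "c \<in> span P" by simp_all
qed

lemma no_antipodes_if_leading_coord_positive:
  assumes "\<And>y. y \<in> P \<Longrightarrow> y $ i > 0 \<or> y $ i = 0 \<and> y $ j > (0::real)" and "y \<in> P"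
  shows "- y \<notin> P"
  using assms(1)[of y] assms(1)[of "- y"] assms(2) by auto

lemma half_system_filter:
  assumes "\<And>y. Q (- y) \<longleftrightarrow> Q y"
  shows "{y \<in> P \<union> uminus ` P. Q y} = {y \<in> P. Q y} \<union> uminus ` {y \<in> P. Q y}"
  using assms by auto

lemma card_lines_of_half_system:
  fixes P :: "(real^'m) set"
  assumes PE: "P \<subseteq> E" and EP: "E \<subseteq> P \<union> uminus ` P" and "finite P"
    and norm: "\<And>y. y \<in> P \<Longrightarrow> y \<bullet> y = c" and "c \<noteq> 0"
    and no_antipodes: "\<And>y. y \<in> P \<Longrightarrow> - y \<notin> P"
  shows "card (lines_of E) = card P"
proof -
  have "span {y} \<in> (\<lambda>y. span {y}) ` P" if "y \<in> E" for y
  proof -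
    have "y \<in> P \<or> - y \<in> P" using that EP by force
    then show ?thesis using span_singleton_uminus[of y] by (metis image_eqI)
  qed
  then have "lines_of E = (\<lambda>y. span {y}) ` P"
    using PE by (auto simp: lines_of_def)
  moreover have "inj_on (\<lambda>y. span {y}) P"
  proof (rule inj_onI)
    fix y y' assume y: "y \<in> P" and y': "y' \<in> P" and lines: "span {y} = span {y'}"
    have "y' \<in> span {y}" using lines by (simp add: span_base)
    then obtain k where k: "y' = k *\<^sub>R y" by (auto simp: span_singleton)
    then have "k * k * c = c" using norm[OF y] norm[OF y'] by simp
    then have "k = 1 \<or> k = -1" using \<open>c \<noteq> 0\<close> by (simp add: square_eq_1_iff)
    then show "y = y'" using k y y' no_antipodes by auto
  qed
  ultimately show ?thesis by (simp add: card_image)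
qed

lemma Eset_invariants_half_system:
  assumes E: "Eset L x0 = P \<union> uminus ` P" and "finite P"
    and "\<And>y. y \<in> P \<Longrightarrow> y \<bullet> y = 6" and "\<And>y. y \<in> P \<Longrightarrow> - y \<notin> P"
    and "independent B" and "span B = span P"
  shows "Eset_invariants L x0 = (card B, card P)"
proof -
  have PE: "P \<subseteq> Eset L x0" and EP: "Eset L x0 \<subseteq> P \<union> uminus ` P" using E by auto
  have "card (lines_of (Eset L x0)) = card P"
    by (rule card_lines_of_half_system[OF PE EP]) (use assms in auto)
  moreover have "dim (span (Eset L x0)) = card B"
    using span_eq_half_system[OF PE EP] assms(6) dim_span_eq_card_independent[OF assms(5)]
    by simp
  ultimately show ?thesis by (simp add: Eset_invariants_def)
qed

lemma prop_holds_iff_Eset_invariants: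
  assumes "even_lattice L"
  shows "prop_holds L r t \<longleftrightarrow> (\<forall>x0\<in>L. x0 \<bullet> x0 = 2 \<longrightarrow> Eset_invariants L x0 = (r, t))"
  using Eset_equiangular[OF assms]
  by (auto simp: prop_holds_def Eset_invariants_def Nrm_def)

section \<open>Integer coordinate lattices\<close>

definition coord_sum :: "real^'m \<Rightarrow> real" where
  "coord_sum x = (\<Sum>i\<in>UNIV. x $ i)"

lemma coord_sum_add [simp]: "coord_sum (x + y) = coord_sum x + coord_sum y"
  and coord_sum_diff [simp]: "coord_sum (x - y) = coord_sum x - coord_sum y"
  and coord_sum_minus [simp]: "coord_sum (- x) = - coord_sum x"
  and coord_sum_scaleR [simp]: "coord_sum (c *\<^sub>R x) = c * coord_sum x"
  and coord_sum_axis [simp]: "coord_sum (axis k c) = c"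
  and coord_sum_zero [simp]: "coord_sum 0 = 0"
  by (simp_all add: coord_sum_def sum.distrib sum_subtractf sum_negf sum_distrib_left axis_def)

lemma int_vec_zero: "int_vec 0"
  and int_vec_add: "int_vec x \<Longrightarrow> int_vec y \<Longrightarrow> int_vec (x + y)"
  and int_vec_minus: "int_vec x \<Longrightarrow> int_vec (- x)"
  and int_vec_diff: "int_vec x \<Longrightarrow> int_vec y \<Longrightarrow> int_vec (x - y)"
  and int_vec_scaleR: "c \<in> \<int> \<Longrightarrow> int_vec x \<Longrightarrow> int_vec (c *\<^sub>R x)"
  and int_vec_axis: "c \<in> \<int> \<Longrightarrow> int_vec (axis k c)"
  by (auto simp: int_vec_def axis_def)

lemmas inner_axis_simps = inner_add_left inner_add_right inner_diff_left inner_diff_right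
  inner_scaleR_left inner_scaleR_right inner_axis_axis inner_real_def

lemma inner_int_vec: "int_vec x \<Longrightarrow> int_vec y \<Longrightarrow> x \<bullet> y \<in> \<int>"
  by (auto simp: int_vec_def inner_vec_def intro!: Ints_sum Ints_mult)

text \<open>Since \<open>m\<^sup>2 \<equiv> m (mod 2)\<close>, the norm of an integer vector has the parity of its coordinate sum.\<close>
lemma int_vec_half_norm:
  assumes x: "int_vec x" and sum: "coord_sum x / 2 \<in> \<int>"
  shows "x \<bullet> x / 2 \<in> \<int>"
proof -
  have half_pair: "m * (m - 1) / 2 \<in> \<int>" if "m \<in> \<int>" for m :: real
  proof -
    obtain k where k: "m = of_int k" using \<open>m \<in> \<int>\<close> Ints_cases by blast
    have "even (k * (k - 1))" by simp
    then obtain l where l: "k * (k - 1) = 2 * l" by (metis evenE)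
    have "m * (m - 1) / 2 = of_int (k * (k - 1)) / 2" by (simp add: k)
    also have "\<dots> = of_int l" by (simp add: l)
    finally show ?thesis by simp
  qed
  have "x \<bullet> x / 2 = (\<Sum>i\<in>UNIV. x $ i * (x $ i - 1) / 2) + coord_sum x / 2"
    by (simp add: inner_vec_def coord_sum_def sum_divide_distrib[symmetric] sum.distrib[symmetric]
        algebra_simps add_divide_distrib[symmetric])
  moreover have "(\<Sum>i\<in>UNIV. x $ i * (x $ i - 1) / 2) \<in> \<int>"
    using x by (intro Ints_sum half_pair) (auto simp: int_vec_def)
  ultimately show ?thesis using sum by (metis Ints_add)
qed

lemma int_vec_root_cases:
  assumes x: "int_vec x" and norm: "(x::real^'m) \<bullet> x = 2"
  obtains i j s t where "i \<noteq> j" "s \<in> {-1, 1}" "t \<in> {-1, 1}" "x = s *\<^sub>R axis i 1 + t *\<^sub>R axis j 1"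
proof -
  have squares: "(\<Sum>i\<in>UNIV. (x $ i)\<^sup>2) = 2" using norm by (simp add: inner_vec_def power2_eq_square)
  have coord: "x $ i \<in> {-1, 0, 1}" for i
  proof -
    obtain m where m: "x $ i = of_int m" using x Ints_cases by (auto simp: int_vec_def)
    have "(x $ i)\<^sup>2 \<le> 2" using member_le_sum[of i UNIV "\<lambda>i. (x $ i)\<^sup>2"] squares by simp
    then have "\<not> 2 \<le> \<bar>m\<bar>" using abs_le_square_iff[of "2::real" "of_int m"] m by auto
    then have "m \<in> {-1, 0, 1}" by auto
    then show ?thesis using m by auto
  qed
  define S where "S = {i. x $ i \<noteq> 0}"
  have "(x $ i)\<^sup>2 = (if i \<in> S then 1 else 0)" for i
    using coord[of i] by (auto simp: S_def)
  then have "(\<Sum>i\<in>UNIV. (x $ i)\<^sup>2) = (\<Sum>i\<in>UNIV. if i \<in> S then 1 else (0::real))"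
    by simp
  then have "card S = 2" using squares by (simp add: sum.If_cases)
  then obtain i j where ij: "i \<noteq> j" "S = {i, j}" by (auto simp: card_2_iff)
  have "x = (x $ i) *\<^sub>R axis i 1 + (x $ j) *\<^sub>R axis j 1"
  proof (subst vec_eq_iff, rule allI)
    fix k show "x $ k = ((x $ i) *\<^sub>R axis i 1 + (x $ j) *\<^sub>R axis j 1) $ k"
      using ij by (cases "k = i"; cases "k = j") (auto simp: axis_def S_def)
  qed
  moreover have "x $ i \<in> {-1, 1}" "x $ j \<in> {-1, 1}" using coord[of i] coord[of j] ij by (auto simp: S_def)
  ultimately show thesis using that ij(1) by blast
qed

lemma A_lat_iff: "x \<in> A_lat \<longleftrightarrow> int_vec x \<and> coord_sum x = 0"
  by (simp add: A_lat_def coord_sum_def)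

lemma D_lat_iff: "x \<in> D_lat \<longleftrightarrow> int_vec x \<and> coord_sum x / 2 \<in> \<int>"
proof -
  have "(\<exists>k\<in>\<int>. coord_sum x = 2 * k) \<longleftrightarrow> coord_sum x / 2 \<in> \<int>"
    by (metis nonzero_mult_div_cancel_left zero_neq_numeral times_divide_eq_right mult.commute)
  then show ?thesis by (simp add: D_lat_def coord_sum_def)
qed

lemma even_lattice_A_lat: "even_lattice A_lat"
  unfolding even_lattice_def
  by (auto simp: A_lat_iff int_vec_zero int_vec_add int_vec_minus inner_int_vec intro!: int_vec_half_norm)

lemma even_lattice_D_lat: "even_lattice D_lat"
  unfolding even_lattice_def
  by (auto simp: D_lat_iff int_vec_zero int_vec_add int_vec_minus inner_int_vec add_divide_distrib
      intro!: int_vec_half_norm Ints_add)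

section \<open>The lattices \<open>A\<^sub>n\<close>\<close>

lemma A_lat_root_cases:
  assumes x: "x \<in> A_lat" and norm: "x \<bullet> x = 2"
  obtains p q where "p \<noteq> q" "x = axis p 1 - axis q 1"
proof -
  have "int_vec x" using x by (simp add: A_lat_iff)
  then obtain i j s t where ij: "i \<noteq> j" and st: "s \<in> {-1, 1}" "t \<in> {-1, 1}"
    and x_eq: "x = s *\<^sub>R axis i 1 + t *\<^sub>R axis j 1"
    using norm by (rule int_vec_root_cases)
  have "s + t = 0" using x by (simp add: A_lat_iff x_eq)
  then consider "s = 1" "t = -1" | "s = -1" "t = 1" using st by auto
  then show thesis
    using that[of i j] that[of j i] ij x_eq by cases (simp_all add: algebra_simps)
qed

lemma A_lat_obtuse_roots:
  assumes pq: "p \<noteq> q" and z: "z \<in> obtuse_roots A_lat (axis p 1 - axis q 1 :: real^'m)"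
  obtains k where "k \<notin> {p, q}" "z = axis q 1 - axis k 1"
    | k where "k \<notin> {p, q}" "z = axis k 1 - axis p 1"
proof -
  have root: "z \<in> A_lat" "z \<bullet> z = 2" and obtuse: "z \<bullet> (axis p 1 - axis q 1) = -1"
    using z by (auto simp: obtuse_roots_def)
  from root obtain a b where ab: "a \<noteq> b" "z = axis a 1 - axis b 1" by (rule A_lat_root_cases)
  show thesis
    using obtuse that ab pq by (auto simp: inner_diff_left inner_diff_right inner_axis_axis split: if_splits)
qed

definition A_half_system :: "'m \<Rightarrow> 'm \<Rightarrow> (real^'m) set" where
  "A_half_system p q = (\<lambda>k. axis p 1 + axis q 1 - 2 *\<^sub>R axis k 1) ` (UNIV - {p, q})"

lemma A_lat_root_axis:
  assumes "p \<noteq> q"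
  shows "axis p 1 - axis q 1 \<in> (A_lat :: (real^'m) set)" "(axis p 1 - axis q 1 :: real^'m) \<bullet> (axis p 1 - axis q 1) = 2"
  using assms by (auto simp: A_lat_iff int_vec_diff int_vec_axis inner_diff_left inner_diff_right inner_axis_axis)

lemma A_half_system_subset_Eset:
  assumes pq: "p \<noteq> q"
  shows "A_half_system p q \<subseteq> Eset A_lat (axis p 1 - axis q 1 :: real^'m)"
proof
  fix y assume "y \<in> A_half_system p q"
  then obtain k where k: "k \<notin> {p, q}" "y = axis p 1 + axis q 1 - 2 *\<^sub>R axis k 1"
    by (auto simp: A_half_system_def)
  define z :: "real^'m" where "z = axis q 1 - axis k 1"
  have "z \<in> obtuse_roots A_lat (axis p 1 - axis q 1)" using k pq
    by (auto simp: obtuse_roots_def z_def A_lat_iff int_vec_diff int_vec_axis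
        inner_diff_left inner_diff_right inner_axis_axis)
  moreover have "y = (axis p 1 - axis q 1) + 2 *\<^sub>R z"
    unfolding k(2) z_def by (simp add: algebra_simps scaleR_2)
  ultimately show "y \<in> Eset A_lat (axis p 1 - axis q 1)"
    unfolding Eset_eq_obtuse_roots[OF even_lattice_A_lat A_lat_root_axis[OF pq]] by blast
qed

lemma Eset_A_lat:
  assumes pq: "p \<noteq> q"
  defines "x0 \<equiv> axis p 1 - axis q 1 :: real^'m"
  shows "Eset A_lat x0 = A_half_system p q \<union> uminus ` A_half_system p q"
proof -
  have "Eset A_lat x0 \<subseteq> A_half_system p q \<union> uminus ` A_half_system p q"
  proof
    fix y assume "y \<in> Eset A_lat x0"
    then obtain z where z: "z \<in> obtuse_roots A_lat x0" and y: "y = x0 + 2 *\<^sub>R z"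
      unfolding Eset_eq_obtuse_roots[OF even_lattice_A_lat A_lat_root_axis[OF pq]] x0_def by blast
    from pq z[unfolded x0_def] show "y \<in> A_half_system p q \<union> uminus ` A_half_system p q"
    proof (cases rule: A_lat_obtuse_roots)
      case (1 k)
      have "y = axis p 1 + axis q 1 - 2 *\<^sub>R axis k 1"
        unfolding y 1(2) x0_def by (simp add: algebra_simps scaleR_2)
      then show ?thesis using 1 by (auto simp: A_half_system_def)
    next
      case (2 k)
      have y': "y = - (axis p 1 + axis q 1 - 2 *\<^sub>R axis k 1)"
        unfolding y 2(2) x0_def by (simp add: algebra_simps scaleR_2)
      show ?thesis unfolding y' A_half_system_def using 2(1) by (intro UnI2 imageI) auto
    qed
  qed
  then show ?thesis
    using A_half_system_subset_Eset[OF pq] Eset_uminus[OF even_lattice_A_lat A_lat_root_axis(1)[OF pq]]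
    unfolding x0_def by blast
qed

lemma A_half_system_coord:
  "(axis p 1 + axis q 1 - 2 *\<^sub>R axis k 1 :: real^'m) $ l
    = (if l = p then 1 else 0) + (if l = q then 1 else 0) - (if l = k then 2 else 0)"
  by (simp add: axis_def)

lemma inj_on_A_half_system:
  "inj_on (\<lambda>k. axis p 1 + axis q 1 - 2 *\<^sub>R axis k 1 :: real^'m) (UNIV - {p, q})"
proof (rule inj_onI)
  fix k k' assume k: "k \<in> UNIV - {p, q}" "k' \<in> UNIV - {p, q}"
    and "axis p 1 + axis q 1 - 2 *\<^sub>R axis k 1 = (axis p 1 + axis q 1 - 2 *\<^sub>R axis k' 1 :: real^'m)"
  then have "(axis p 1 + axis q 1 - 2 *\<^sub>R axis k 1 :: real^'m) $ k
      = (axis p 1 + axis q 1 - 2 *\<^sub>R axis k' 1 :: real^'m) $ k" by simp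
  then show "k = k'" using k unfolding A_half_system_coord by (auto split: if_splits)
qed

lemma independent_A_half_system:
  assumes pq: "p \<noteq> q"
  shows "independent (A_half_system p q :: (real^'m) set)"
proof (rule independent_if_scalars_zero)
  show "finite (A_half_system p q :: (real^'m) set)" by (simp add: A_half_system_def)
  fix f v assume sum: "(\<Sum>x\<in>A_half_system p q. f x *\<^sub>R x) = (0 :: real^'m)"
    and v: "v \<in> A_half_system p q"
  then obtain k0 where k0: "k0 \<notin> {p, q}" "v = axis p 1 + axis q 1 - 2 *\<^sub>R axis k0 1"
    by (auto simp: A_half_system_def)
  \<comment> \<open>\<open>v\<close> is the only vector of the system with a nonzero \<open>k0\<close>-th coordinate\<close>
  have coord: "x $ k0 = (if x = v then -2 else 0)" if x: "x \<in> A_half_system p q" for x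
  proof -
    obtain k where k: "k \<notin> {p, q}" "x = axis p 1 + axis q 1 - 2 *\<^sub>R axis k 1"
      using x by (auto simp: A_half_system_def)
    then have "x = v \<longleftrightarrow> k = k0" using k0 by (auto simp: axis_eq_axis)
    moreover have "x $ k0 = (if k0 = p then 1 else 0) + (if k0 = q then 1 else 0) - (if k0 = k then 2 else 0)"
      unfolding k(2) by (rule A_half_system_coord)
    ultimately show ?thesis using k0 by auto
  qed
  have "(\<Sum>x\<in>A_half_system p q. f x * x $ k0) = (\<Sum>x\<in>A_half_system p q. if x = v then - 2 * f v else 0)"
    by (rule sum.cong) (auto simp: coord)
  also have "\<dots> = - 2 * f v" using v by (simp add: A_half_system_def)
  finally have "(\<Sum>x\<in>A_half_system p q. f x * x $ k0) = - 2 * f v" .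
  moreover have "(\<Sum>x\<in>A_half_system p q. f x * x $ k0) = 0"
    using arg_cong[OF sum, of "\<lambda>x. x $ k0"] by (simp add: sum_component)
  ultimately show "f v = 0" by simp
qed

lemma Eset_invariants_A_lat:
  assumes pq: "p \<noteq> q"
  shows "Eset_invariants A_lat (axis p 1 - axis q 1 :: real^'m) = (CARD('m) - 2, CARD('m) - 2)"
proof -
  have card: "card (A_half_system p q :: (real^'m) set) = CARD('m) - 2"
    using pq by (simp add: A_half_system_def card_image[OF inj_on_A_half_system] card_Diff_subset)
  have member: "y $ p = 1" "y \<bullet> y = 6" if y: "y \<in> A_half_system p q" for y :: "real^'m"
  proof -
    obtain k where "k \<noteq> p" "k \<noteq> q" and y: "y = axis p 1 + axis q 1 - 2 *\<^sub>R axis k 1"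
      using y by (auto simp: A_half_system_def)
    then have "p \<noteq> k" "q \<noteq> k" "q \<noteq> p" using pq by auto
    then show "y $ p = 1" "y \<bullet> y = 6"
      by (simp add: y axis_def,
          simp add: y inner_diff_left inner_diff_right inner_add_left inner_add_right inner_axis_axis)
  qed
  have "- y \<notin> A_half_system p q" if "y \<in> A_half_system p q" for y :: "real^'m"
    using that member(1)[of y] member(1)[of "- y"] by auto
  then show ?thesis
    using Eset_invariants_half_system[OF Eset_A_lat[OF pq], of "A_half_system p q"]
      independent_A_half_system[OF pq] card member(2)
    by (simp add: A_half_system_def)
qed

lemma prop_holds_A_lat: "prop_holds (A_lat :: (real^'m) set) (CARD('m) - 2) (CARD('m) - 2)"
  unfolding prop_holds_iff_Eset_invariants[OF even_lattice_A_lat]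
  by (metis A_lat_root_cases Eset_invariants_A_lat)

section \<open>The lattices \<open>D\<^sub>n\<close>\<close>

lemma D_lat_obtuse_roots:
  assumes ij: "i \<noteq> j" and s: "s \<in> {-1, 1}" and t: "t \<in> {-1, 1}"
    and z: "z \<in> obtuse_roots D_lat (s *\<^sub>R axis i 1 + t *\<^sub>R axis j 1 :: real^'m)"
  obtains k c where "k \<notin> {i, j}" "c \<in> {-1, 1}" "z = (- s) *\<^sub>R axis i 1 + c *\<^sub>R axis k 1"
    | k c where "k \<notin> {i, j}" "c \<in> {-1, 1}" "z = (- t) *\<^sub>R axis j 1 + c *\<^sub>R axis k 1"
proof -
  have root: "int_vec z" "z \<bullet> z = 2" and obtuse: "z \<bullet> (s *\<^sub>R axis i 1 + t *\<^sub>R axis j 1) = -1"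
    using z by (auto simp: obtuse_roots_def D_lat_iff)
  from root obtain a b \<sigma> \<tau> where ab: "a \<noteq> b" "\<sigma> \<in> {-1, 1}" "\<tau> \<in> {-1, 1}"
    and z_eq: "z = \<sigma> *\<^sub>R axis a 1 + \<tau> *\<^sub>R axis b 1"
    by (rule int_vec_root_cases)
  note obtuse = obtuse[unfolded z_eq, simplified inner_axis_simps]
  consider "a = i" | "a = j" | "b = i" "a \<notin> {i, j}" | "b = j" "a \<notin> {i, j}" | "a \<notin> {i, j}" "b \<notin> {i, j}"
    by blast
  then show thesis
  proof cases
    case 1
    then have "b \<noteq> j" "\<sigma> = - s" using obtuse ij ab s t by (auto split: if_splits)
    then show thesis using that(1)[of b \<tau>] 1 ab z_eq by auto
  next
    case 2
    then have "b \<noteq> i" "\<sigma> = - t" using obtuse ij ab s t by (auto split: if_splits)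
    then show thesis using that(2)[of b \<tau>] 2 ab z_eq by auto
  next
    case 3
    then have "\<tau> = - s" using obtuse ij ab s t by (auto split: if_splits)
    then show thesis using that(1)[of a \<sigma>] 3 ab z_eq by (auto simp: add.commute)
  next
    case 4
    then have "\<tau> = - t" using obtuse ij ab s t by (auto split: if_splits)
    then show thesis using that(2)[of a \<sigma>] 4 ab z_eq by (auto simp: add.commute)
  next
    case 5
    then show thesis using obtuse by auto
  qed
qed

definition D_half_system :: "'m \<Rightarrow> 'm \<Rightarrow> real \<Rightarrow> real \<Rightarrow> (real^'m) set" where
  "D_half_system i j s t =
     (\<lambda>(k, c). s *\<^sub>R axis i 1 - t *\<^sub>R axis j 1 + (2 * c) *\<^sub>R axis k 1) ` ((UNIV - {i, j}) \<times> {-1, 1})"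

lemma D_lat_root_axis:
  assumes "i \<noteq> j" "s \<in> {-1, 1}" "t \<in> {-1, 1}"
  shows "s *\<^sub>R axis i 1 + t *\<^sub>R axis j 1 \<in> (D_lat :: (real^'m) set)"
    "(s *\<^sub>R axis i 1 + t *\<^sub>R axis j 1 :: real^'m) \<bullet> (s *\<^sub>R axis i 1 + t *\<^sub>R axis j 1) = 2"
  using assms by (auto simp: D_lat_iff int_vec_add int_vec_diff int_vec_minus int_vec_scaleR int_vec_axis
      inner_axis_simps)

lemma D_half_system_subset_Eset:
  assumes ij: "i \<noteq> j" and s: "s \<in> {-1, 1}" and t: "t \<in> {-1, 1}"
  defines "x0 \<equiv> s *\<^sub>R axis i 1 + t *\<^sub>R axis j 1 :: real^'m"
  shows "D_half_system i j s t \<subseteq> Eset D_lat x0"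
proof
  fix y assume "y \<in> D_half_system i j s t"
  then obtain k c where k: "k \<notin> {i, j}" "c \<in> {-1, 1}"
    and y: "y = s *\<^sub>R axis i 1 - t *\<^sub>R axis j 1 + (2 * c) *\<^sub>R axis k 1"
    by (auto simp: D_half_system_def)
  define z :: "real^'m" where "z = (- t) *\<^sub>R axis j 1 + c *\<^sub>R axis k 1"
  have "z \<in> D_lat" using t k
    by (auto simp: z_def D_lat_iff int_vec_add int_vec_diff int_vec_minus int_vec_scaleR int_vec_axis)
  moreover have "z \<bullet> z = 2" "z \<bullet> x0 = -1" using k ij s t
    by (auto simp: z_def x0_def inner_axis_simps)
  moreover have "y = x0 + 2 *\<^sub>R z" unfolding y x0_def z_def by (simp add: vec_eq_iff axis_def)
  ultimately show "y \<in> Eset D_lat x0"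
    unfolding Eset_eq_obtuse_roots[OF even_lattice_D_lat D_lat_root_axis[OF ij s t]] x0_def obtuse_roots_def
    by blast
qed

lemma Eset_D_lat:
  assumes ij: "i \<noteq> j" and s: "s \<in> {-1, 1}" and t: "t \<in> {-1, 1}"
  defines "x0 \<equiv> s *\<^sub>R axis i 1 + t *\<^sub>R axis j 1 :: real^'m"
  shows "Eset D_lat x0 = D_half_system i j s t \<union> uminus ` D_half_system i j s t"
proof -
  have "Eset D_lat x0 \<subseteq> D_half_system i j s t \<union> uminus ` D_half_system i j s t"
  proof
    fix y assume "y \<in> Eset D_lat x0"
    then obtain z where z: "z \<in> obtuse_roots D_lat x0" and y: "y = x0 + 2 *\<^sub>R z"
      unfolding Eset_eq_obtuse_roots[OF even_lattice_D_lat D_lat_root_axis[OF ij s t]] x0_def by blast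
    from ij s t z[unfolded x0_def]
    show "y \<in> D_half_system i j s t \<union> uminus ` D_half_system i j s t"
    proof (cases rule: D_lat_obtuse_roots)
      case (1 k c)
      have y': "y = - (s *\<^sub>R axis i 1 - t *\<^sub>R axis j 1 + (2 * - c) *\<^sub>R axis k 1)"
        unfolding y 1(3) x0_def by (simp add: vec_eq_iff axis_def)
      have kc: "(k, - c) \<in> (UNIV - {i, j}) \<times> {-1, 1}" using 1 by auto
      show ?thesis
        unfolding y' D_half_system_def by (intro UnI2 imageI image_eqI[OF _ kc]) simp
    next
      case (2 k c)
      have "y = s *\<^sub>R axis i 1 - t *\<^sub>R axis j 1 + (2 * c) *\<^sub>R axis k 1"
        unfolding y 2(3) x0_def by (simp add: vec_eq_iff axis_def)
      then show ?thesis using 2 by (auto simp: D_half_system_def)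
    qed
  qed
  then show ?thesis
    using D_half_system_subset_Eset[OF ij s t] Eset_uminus[OF even_lattice_D_lat D_lat_root_axis(1)[OF ij s t]]
    unfolding x0_def by blast
qed

lemma D_half_system_memberD:
  assumes "y \<in> D_half_system i j s t" and ij: "i \<noteq> j" and s: "s \<in> {-1, 1}" and t: "t \<in> {-1, 1}"
  shows "y \<bullet> y = 6" "y $ i = s"
proof -
  obtain k c where k: "k \<notin> {i, j}" "c \<in> {-1, 1}"
    and y: "y = s *\<^sub>R axis i 1 - t *\<^sub>R axis j 1 + (2 * c) *\<^sub>R axis k 1"
    using assms(1) by (auto simp: D_half_system_def)
  have neq: "i \<noteq> k" "j \<noteq> k" "j \<noteq> i" using k ij by auto
  then show "y \<bullet> y = 6" using k s t by (auto simp: y inner_axis_simps)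
  show "y $ i = s" using neq by (simp add: y axis_def)
qed

lemma card_D_half_system:
  assumes ij: "i \<noteq> j"
  shows "card (D_half_system i j s t :: (real^'m) set) = 2 * (CARD('m) - 2)"
proof -
  let ?g = "\<lambda>(k, c). s *\<^sub>R axis i 1 - t *\<^sub>R axis j 1 + (2 * c) *\<^sub>R axis k 1 :: real^'m"
  have "inj_on ?g ((UNIV - {i, j}) \<times> {-1, 1})"
  proof (rule inj_onI)
    fix x x' assume x: "x \<in> (UNIV - {i, j}) \<times> {-1, 1}" "x' \<in> (UNIV - {i, j}) \<times> {-1, 1}"
      and eq: "?g x = ?g x'"
    obtain k c k' c' where kc: "x = (k, c)" "x' = (k', c')" by fastforce
    then have k: "k \<notin> {i, j}" "k' \<notin> {i, j}" "c \<in> {-1, 1}" "c' \<in> {-1, 1}" using x by auto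
    have "?g (k, c) $ k = ?g (k', c') $ k" using eq kc by simp
    then have "2 * c = (if k = k' then 2 * c' else 0)" using k by (auto simp: axis_def)
    then show "x = x'" using k kc by (auto split: if_splits)
  qed
  moreover have "card (UNIV - {i, j} :: 'm set) = CARD('m) - 2" using ij by (simp add: card_Diff_subset)
  ultimately show ?thesis by (simp add: D_half_system_def card_image card_cartesian_product)
qed

lemma span_D_half_system:
  assumes ij: "i \<noteq> j" and n: "CARD('m) \<ge> 3"
  shows "span (D_half_system i j s t :: (real^'m) set)
    = span (insert (s *\<^sub>R axis i 1 - t *\<^sub>R axis j 1) ((\<lambda>k. axis k 1) ` (UNIV - {i, j})))"
    (is "span ?P = span (insert ?u ?A)")
proof -
  have gen: "?u + (2 * c) *\<^sub>R axis k 1 \<in> ?P" if "k \<notin> {i, j}" "c \<in> {-1, 1}" for k c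
    using that by (auto simp: D_half_system_def)
  have "?P \<subseteq> span (insert ?u ?A)"
  proof
    fix y assume "y \<in> ?P"
    then obtain k c where k: "k \<notin> {i, j}" and y: "y = ?u + (2 * c) *\<^sub>R axis k 1"
      by (auto simp: D_half_system_def)
    have "?u \<in> span (insert ?u ?A)" "axis k 1 \<in> span (insert ?u ?A)"
      using k by (auto intro: span_base)
    then show "y \<in> span (insert ?u ?A)" unfolding y by (simp add: span_add span_scale)
  qed
  moreover have "?A \<subseteq> span ?P"
  proof
    fix a assume "a \<in> ?A"
    then obtain k where k: "k \<notin> {i, j}" "a = axis k 1" by auto
    have a: "a = (1/4) *\<^sub>R ((?u + (2 * 1) *\<^sub>R axis k 1) - (?u + (2 * -1) *\<^sub>R axis k 1))"
      by (simp add: k(2) vec_eq_iff axis_def)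
    show "a \<in> span ?P"
      by (subst a) (intro span_scale span_diff span_base gen k(1); simp)
  qed
  moreover have "?u \<in> span ?P"
  proof -
    have "card (UNIV - {i, j} :: 'm set) > 0" using ij n by (simp add: card_Diff_subset)
    then obtain k where k: "k \<notin> {i, j}" by (metis card_gt_0_iff ex_in_conv DiffE)
    have u: "?u = (1/2) *\<^sub>R ((?u + (2 * 1) *\<^sub>R axis k 1) + (?u + (2 * -1) *\<^sub>R axis k 1))"
      by (simp add: vec_eq_iff axis_def)
    show ?thesis
      by (subst u) (intro span_scale span_add span_base gen k; simp)
  qed
  ultimately show ?thesis by (simp add: span_eq)
qed

lemma independent_D_basis:
  fixes s t :: real
  assumes ij: "i \<noteq> j" and s: "s \<noteq> 0"
  defines "u \<equiv> s *\<^sub>R axis i 1 - t *\<^sub>R axis j 1 :: real^'m"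
  shows "independent (insert u ((\<lambda>k. axis k 1) ` (UNIV - {i, j})))"
    and "card (insert u ((\<lambda>k. axis k 1) ` (UNIV - {i, j}))) = CARD('m) - 1"
proof -
  have "u $ i \<noteq> 0" using ij s by (simp add: u_def axis_def)
  then have u: "u \<noteq> 0" "u \<notin> (\<lambda>k. axis k 1) ` (UNIV - {i, j})" by (auto simp: axis_def)
  show "independent (insert u ((\<lambda>k. axis k 1) ` (UNIV - {i, j})))"
  proof (rule pairwise_orthogonal_independent)
    show "pairwise orthogonal (insert u ((\<lambda>k. axis k 1) ` (UNIV - {i, j})))"
      using ij by (auto simp: pairwise_def orthogonal_def u_def inner_axis_simps)
  qed (use u in \<open>auto simp: axis_eq_0_iff\<close>)
  have "inj_on (\<lambda>k. axis k (1::real) :: real^'m) (UNIV - {i, j})"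
    by (auto intro!: inj_onI simp: axis_eq_axis)
  then have "card ((\<lambda>k. axis k 1) ` (UNIV - {i, j}) :: (real^'m) set) = CARD('m) - 2"
    using ij by (simp add: card_image card_Diff_subset)
  moreover have "card {i, j} \<le> CARD('m)" by (rule card_mono) auto
  ultimately show "card (insert u ((\<lambda>k. axis k 1) ` (UNIV - {i, j}))) = CARD('m) - 1"
    using u ij by simp
qed

lemma Eset_invariants_D_lat:
  assumes ij: "i \<noteq> j" and s: "s \<in> {-1, 1}" and t: "t \<in> {-1, 1}" and n: "CARD('m) \<ge> 3"
  shows "Eset_invariants D_lat (s *\<^sub>R axis i 1 + t *\<^sub>R axis j 1 :: real^'m)
    = (CARD('m) - 1, 2 * (CARD('m) - 2))"
proof -
  have "finite (D_half_system i j s t :: (real^'m) set)" by (simp add: D_half_system_def)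
  moreover have "- y \<notin> D_half_system i j s t" if "y \<in> D_half_system i j s t" for y :: "real^'m"
    using D_half_system_memberD(2)[OF that ij s t] D_half_system_memberD(2)[of "- y", OF _ ij s t] s
    by auto
  ultimately show ?thesis
    using Eset_invariants_half_system[OF Eset_D_lat[OF ij s t]] D_half_system_memberD(1)[OF _ ij s t]
      span_D_half_system[OF ij n] independent_D_basis[OF ij, of s t] card_D_half_system[OF ij] s
    by auto
qed

lemma prop_holds_D_lat:
  assumes "CARD('m) \<ge> 3"
  shows "prop_holds (D_lat :: (real^'m) set) (CARD('m) - 1) (2 * (CARD('m) - 2))"
  unfolding prop_holds_iff_Eset_invariants[OF even_lattice_D_lat]
  by (metis D_lat_iff int_vec_root_cases Eset_invariants_D_lat assms)

section \<open>Coordinates in \<open>\<real>\<^sup>8\<close>\<close>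

lemma UNIV_8: "(UNIV :: 8 set) = {0, 1, 2, 3, 4, 5, 6, 7}"
proof -
  have "x \<in> {0, 1, 2, 3, 4, 5, 6, 7}" for x :: 8
  proof (induct x)
    case (of_int z)
    then have "z \<in> {0, 1, 2, 3, 4, 5, 6, 7}" by auto
    then show ?case by auto
  qed
  then show ?thesis by auto
qed

lemma forall_8: "(\<forall>k::8. P k) \<longleftrightarrow> P 0 \<and> P 1 \<and> P 2 \<and> P 3 \<and> P 4 \<and> P 5 \<and> P 6 \<and> P 7"
  by (metis UNIV_8 UNIV_I insertE empty_iff)

lemma sum_8: "(\<Sum>k\<in>(UNIV::8 set). f k) = f 0 + (f 1 + (f 2 + (f 3 + (f 4 + (f 5 + (f 6 + f 7))))))"
proof -
  have distinct: "(0::8) \<notin> {1, 2, 3, 4, 5, 6, 7}" "(1::8) \<notin> {2, 3, 4, 5, 6, 7}" "(2::8) \<notin> {3, 4, 5, 6, 7}"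
    "(3::8) \<notin> {4, 5, 6, 7}" "(4::8) \<notin> {5, 6, 7}" "(5::8) \<notin> {6, 7}" "(6::8) \<notin> {7}"
    by simp_all
  show ?thesis
    unfolding UNIV_8
    by (simp only: sum.insert finite.emptyI finite_insert distinct sum.empty add_0_right simp_thms empty_iff)
qed

definition vec8 :: "real \<Rightarrow> real \<Rightarrow> real \<Rightarrow> real \<Rightarrow> real \<Rightarrow> real \<Rightarrow> real \<Rightarrow> real \<Rightarrow> real^8" where
  "vec8 a0 a1 a2 a3 a4 a5 a6 a7 = (\<chi> k. if k = 0 then a0 else if k = 1 then a1 else if k = 2 then a2 else
      if k = 3 then a3 else if k = 4 then a4 else if k = 5 then a5 else if k = 6 then a6 else a7)"

lemma vec8_nth [simp]:
  "vec8 a0 a1 a2 a3 a4 a5 a6 a7 $ 0 = a0" "vec8 a0 a1 a2 a3 a4 a5 a6 a7 $ 1 = a1"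
  "vec8 a0 a1 a2 a3 a4 a5 a6 a7 $ 2 = a2" "vec8 a0 a1 a2 a3 a4 a5 a6 a7 $ 3 = a3"
  "vec8 a0 a1 a2 a3 a4 a5 a6 a7 $ 4 = a4" "vec8 a0 a1 a2 a3 a4 a5 a6 a7 $ 5 = a5"
  "vec8 a0 a1 a2 a3 a4 a5 a6 a7 $ 6 = a6" "vec8 a0 a1 a2 a3 a4 a5 a6 a7 $ 7 = a7"
  by (simp_all add: vec8_def)

lemma vec8_eta: "x = vec8 (x$0) (x$1) (x$2) (x$3) (x$4) (x$5) (x$6) (x$7)"
  by (simp add: vec_eq_iff forall_8)

lemma vec8_eq_iff: "vec8 a0 a1 a2 a3 a4 a5 a6 a7 = vec8 b0 b1 b2 b3 b4 b5 b6 b7 \<longleftrightarrow>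
    a0 = b0 \<and> a1 = b1 \<and> a2 = b2 \<and> a3 = b3 \<and> a4 = b4 \<and> a5 = b5 \<and> a6 = b6 \<and> a7 = b7"
  and vec8_add: "vec8 a0 a1 a2 a3 a4 a5 a6 a7 + vec8 b0 b1 b2 b3 b4 b5 b6 b7 =
    vec8 (a0+b0) (a1+b1) (a2+b2) (a3+b3) (a4+b4) (a5+b5) (a6+b6) (a7+b7)"
  and vec8_diff: "vec8 a0 a1 a2 a3 a4 a5 a6 a7 - vec8 b0 b1 b2 b3 b4 b5 b6 b7 =
    vec8 (a0-b0) (a1-b1) (a2-b2) (a3-b3) (a4-b4) (a5-b5) (a6-b6) (a7-b7)"
  and vec8_minus: "- vec8 a0 a1 a2 a3 a4 a5 a6 a7 = vec8 (-a0) (-a1) (-a2) (-a3) (-a4) (-a5) (-a6) (-a7)"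
  and vec8_scaleR: "c *\<^sub>R vec8 a0 a1 a2 a3 a4 a5 a6 a7 =
    vec8 (c*a0) (c*a1) (c*a2) (c*a3) (c*a4) (c*a5) (c*a6) (c*a7)"
  and vec8_zero: "(0::real^8) = vec8 0 0 0 0 0 0 0 0"
  and axis_8: "axis 0 c = vec8 c 0 0 0 0 0 0 0" "axis 1 c = vec8 0 c 0 0 0 0 0 0"
    "axis 2 c = vec8 0 0 c 0 0 0 0 0" "axis 3 c = vec8 0 0 0 c 0 0 0 0"
    "axis 4 c = vec8 0 0 0 0 c 0 0 0" "axis 5 c = vec8 0 0 0 0 0 c 0 0"
    "axis 6 c = vec8 0 0 0 0 0 0 c 0" "axis 7 c = vec8 0 0 0 0 0 0 0 c"
  and e_half_vec8: "e_half = vec8 (1/2) (1/2) (1/2) (1/2) (1/2) (1/2) (1/2) (1/2)"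
  by (simp_all add: vec_eq_iff forall_8 axis_def e_half_def)

lemma inner_vec8: "vec8 a0 a1 a2 a3 a4 a5 a6 a7 \<bullet> vec8 b0 b1 b2 b3 b4 b5 b6 b7 =
    a0*b0 + a1*b1 + a2*b2 + a3*b3 + a4*b4 + a5*b5 + a6*b6 + a7*b7"
  and inner_vec8_left: "vec8 a0 a1 a2 a3 a4 a5 a6 a7 \<bullet> x =
    a0 * x$0 + a1 * x$1 + a2 * x$2 + a3 * x$3 + a4 * x$4 + a5 * x$5 + a6 * x$6 + a7 * x$7"
  and coord_sum_vec8: "coord_sum (vec8 a0 a1 a2 a3 a4 a5 a6 a7) = a0 + a1 + a2 + a3 + a4 + a5 + a6 + a7"
  and int_vec_vec8: "int_vec (vec8 a0 a1 a2 a3 a4 a5 a6 a7) \<longleftrightarrow>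
    a0 \<in> \<int> \<and> a1 \<in> \<int> \<and> a2 \<in> \<int> \<and> a3 \<in> \<int> \<and> a4 \<in> \<int> \<and> a5 \<in> \<int> \<and> a6 \<in> \<int> \<and> a7 \<in> \<int>"
  by (simp_all add: inner_vec_def coord_sum_def int_vec_def sum_8 forall_8 add.assoc)

lemmas vec8_simps = vec8_eq_iff vec8_add vec8_diff vec8_minus vec8_scaleR axis_8 e_half_vec8
  inner_vec8 coord_sum_vec8 int_vec_vec8

section \<open>The lattices \<open>E\<^sub>8\<close>, \<open>E\<^sub>7\<close>, \<open>E\<^sub>6\<close>\<close>

lemma inner_e_half: "x \<bullet> e_half = coord_sum x / 2"
  by (simp add: inner_vec_def coord_sum_def e_half_def sum_divide_distrib)

lemma E8_lat_iff: "x \<in> E8_lat \<longleftrightarrow> (\<exists>d\<in>D_lat. \<exists>c\<in>{0, 1}. x = d + c *\<^sub>R e_half)"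
  unfolding E8_lat_def by auto

lemma scaleR_2_e_half_in_D_lat: "2 *\<^sub>R e_half \<in> D_lat"
  and inner_e_half_Ints: "d \<in> D_lat \<Longrightarrow> d \<bullet> e_half \<in> \<int>"
  and inner_e_half_self: "e_half \<bullet> e_half = 2"
  by (simp add: D_lat_iff vec8_simps, simp add: D_lat_iff inner_e_half, simp add: vec8_simps)

lemma E8_lat_add: "x \<in> E8_lat \<Longrightarrow> y \<in> E8_lat \<Longrightarrow> x + y \<in> E8_lat"
  and E8_lat_minus: "x \<in> E8_lat \<Longrightarrow> - x \<in> E8_lat"
proof -
  have D: "even_lattice (D_lat :: (real^8) set)" by (rule even_lattice_D_lat)
  note e2 = scaleR_2_e_half_in_D_lat
  assume x: "x \<in> E8_lat"
  then obtain d c where d: "d \<in> D_lat" and c: "c \<in> {0, 1}" and x_eq: "x = d + c *\<^sub>R e_half"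
    unfolding E8_lat_iff by blast
  have "- d - c *\<^sub>R (2 *\<^sub>R e_half) \<in> D_lat"
    using c d e2 by (auto intro: even_lattice_diff[OF D] even_lattice_minus[OF D] even_lattice_zero[OF D])
  moreover have "- x = (- d - c *\<^sub>R (2 *\<^sub>R e_half)) + c *\<^sub>R e_half" using c by (auto simp: x_eq scaleR_2)
  ultimately show "- x \<in> E8_lat" using c by (auto simp: E8_lat_iff)
  assume "y \<in> E8_lat"
  then obtain d' c' where d': "d' \<in> D_lat" and c': "c' \<in> {0, 1}" and y_eq: "y = d' + c' *\<^sub>R e_half"
    unfolding E8_lat_iff by blast
  have "d + d' \<in> D_lat" "d + d' + 2 *\<^sub>R e_half \<in> D_lat"
    using d d' e2 by (simp_all add: even_lattice_add[OF D])
  moreover have "x + y = (if c + c' = 2 then (d + d' + 2 *\<^sub>R e_half) + 0 *\<^sub>R e_half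
      else (d + d') + (c + c') *\<^sub>R e_half)"
    using c c' by (auto simp: x_eq y_eq scaleR_2 add_ac)
  ultimately show "x + y \<in> E8_lat" using c c' by (auto simp: E8_lat_iff)
qed

lemma inner_E8_lat: "x \<in> E8_lat \<Longrightarrow> y \<in> E8_lat \<Longrightarrow> x \<bullet> y \<in> \<int>"
  and E8_lat_half_norm: "x \<in> E8_lat \<Longrightarrow> x \<bullet> x / 2 \<in> \<int>"
proof -
  have D: "even_lattice (D_lat :: (real^8) set)" by (rule even_lattice_D_lat)
  note De = inner_e_half_Ints and ee = inner_e_half_self
  assume "x \<in> E8_lat"
  then obtain d c where d: "d \<in> D_lat" and c: "c \<in> {0, 1}" and x_eq: "x = d + c *\<^sub>R e_half"
    unfolding E8_lat_iff by blast
  have "x \<bullet> x / 2 = d \<bullet> d / 2 + c * (d \<bullet> e_half) + c * c * (e_half \<bullet> e_half) / 2"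
    by (simp add: x_eq algebra_simps inner_commute add_divide_distrib)
  moreover have "d \<bullet> d / 2 + c * (d \<bullet> e_half) + c * c * (e_half \<bullet> e_half) / 2 \<in> \<int>"
    using c d De[of d] even_lattice_half_norm[OF D d] ee by (auto intro!: Ints_add)
  ultimately show "x \<bullet> x / 2 \<in> \<int>" by (simp only:)
  assume "y \<in> E8_lat"
  then obtain d' c' where d': "d' \<in> D_lat" and c': "c' \<in> {0, 1}" and y_eq: "y = d' + c' *\<^sub>R e_half"
    unfolding E8_lat_iff by blast
  have "x \<bullet> y = d \<bullet> d' + c * (d' \<bullet> e_half) + c' * (d \<bullet> e_half) + c * c' * (e_half \<bullet> e_half)"
    by (simp add: x_eq y_eq algebra_simps inner_commute)
  moreover have "d \<bullet> d' + c * (d' \<bullet> e_half) + c' * (d \<bullet> e_half) + c * c' * (e_half \<bullet> e_half) \<in> \<int>"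
    using c c' d d' De[of d] De[of d'] even_lattice_inner[OF D d d'] ee by (auto intro!: Ints_add)
  ultimately show "x \<bullet> y \<in> \<int>" by (simp only:)
qed

lemma even_lattice_E8_lat: "even_lattice E8_lat"
  unfolding even_lattice_def
  using E8_lat_add E8_lat_minus inner_E8_lat E8_lat_half_norm even_lattice_zero[OF even_lattice_D_lat]
  by (auto simp: E8_lat_def)

lemma E8_lat_iff_int_vec: "x \<in> E8_lat \<longleftrightarrow> (int_vec x \<or> int_vec (x - e_half)) \<and> coord_sum x / 2 \<in> \<int>"
proof -
  have "x \<in> E8_lat \<longleftrightarrow> x \<in> D_lat \<or> x - e_half \<in> D_lat"
    unfolding E8_lat_iff by (auto intro: bexI[of _ "x - e_half"])
  moreover have "coord_sum (x - e_half) / 2 \<in> \<int> \<longleftrightarrow> coord_sum x / 2 \<in> \<int>"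
  proof -
    have "coord_sum (x - e_half) / 2 = coord_sum x / 2 - 2"
      by (simp add: vec8_simps diff_divide_distrib)
    then show ?thesis by (metis Ints_diff Ints_add Ints_numeral diff_add_cancel)
  qed
  ultimately show ?thesis unfolding D_lat_iff by blast
qed

lemma E7_lat_iff: "x \<in> E7_lat \<longleftrightarrow> x \<in> E8_lat \<and> x $ 6 = x $ 7"
  by (simp add: E7_lat_def inner_diff_right inner_axis)

lemma E6_lat_iff: "x \<in> E6_lat \<longleftrightarrow> x \<in> E8_lat \<and> x $ 5 = x $ 6 \<and> x $ 6 = x $ 7"
  by (auto simp: E6_lat_def E7_lat_iff inner_diff_right inner_axis)

lemma even_lattice_E7_lat: "even_lattice E7_lat"
  unfolding E7_lat_def by (rule even_lattice_orthogonal_sublattice[OF even_lattice_E8_lat])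

lemma even_lattice_E6_lat: "even_lattice E6_lat"
  unfolding E6_lat_def by (rule even_lattice_orthogonal_sublattice[OF even_lattice_E7_lat])

lemma E8_lat_root_cases:
  assumes x: "x \<in> E8_lat" and norm: "x \<bullet> x = 2"
  obtains (integral) i j s t
    where "i \<noteq> j" "s \<in> {-1, 1}" "t \<in> {-1, 1}" "x = s *\<^sub>R axis i 1 + t *\<^sub>R axis j 1"
  | (half) "\<And>k. x $ k \<in> {-1/2, 1/2}"
proof -
  obtain d c where d: "d \<in> D_lat" and c: "c \<in> {0, 1}" and x_eq: "x = d + c *\<^sub>R e_half"
    using x unfolding E8_lat_iff by blast
  show thesis
  proof (cases "c = 0")
    case True
    then have "int_vec x" using d x_eq by (simp add: D_lat_iff)
    then show thesis using norm integral int_vec_root_cases by metis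
  next
    case False
    \<comment> \<open>every coordinate lies in \<open>\<int> + 1/2\<close>, so its square is at least \<open>1/4\<close>, with equality throughout\<close>
    have quarter: "(x $ k)\<^sup>2 - 1/4 \<ge> 0" for k
    proof -
      obtain m where m: "d $ k = of_int m" using d Ints_cases by (auto simp: D_lat_iff int_vec_def)
      have "(x $ k)\<^sup>2 - 1/4 = of_int (m * (m + 1))"
        using False c by (simp add: x_eq m e_half_def power2_eq_square algebra_simps)
      moreover have "0 \<le> m * (m + 1)" by (cases "0 \<le> m") (auto intro: mult_nonpos_nonpos)
      ultimately show ?thesis by (metis of_int_nonneg)
    qed
    have "(\<Sum>k\<in>UNIV. (x $ k)\<^sup>2 - 1/4) = 0"
      using norm by (simp add: sum_subtractf inner_vec_def power2_eq_square)
    then have "(x $ k)\<^sup>2 = (1/2)\<^sup>2" for k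
      using sum_nonneg_eq_0_iff[of UNIV "\<lambda>k. (x $ k)\<^sup>2 - 1/4"] quarter by (simp add: power2_eq_square)
    then show thesis using half by (auto simp: power2_eq_iff)
  qed
qed

definition base_root :: "real^8" where
  "base_root = axis 0 1 + axis 1 1"

lemma base_root_vec8: "base_root = vec8 1 1 0 0 0 0 0 0"
  by (simp add: base_root_def vec8_simps)

lemma inner_base_root: "x \<bullet> base_root = x $ 0 + x $ 1"
  by (simp add: base_root_def inner_add_right inner_axis)

lemma E6_lat_subset_E7_lat: "E6_lat \<subseteq> E7_lat"
  and E7_lat_subset_E8_lat: "E7_lat \<subseteq> E8_lat"
  by (auto simp: E6_lat_iff E7_lat_iff)

lemma base_root_root: "base_root \<in> E8_lat" "base_root \<in> E7_lat" "base_root \<in> E6_lat"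
  "base_root \<bullet> base_root = 2"
  by (simp_all add: base_root_vec8 E6_lat_iff E7_lat_iff E8_lat_iff_int_vec vec8_simps)

lemma half_root_common_neighbour:
  assumes half: "\<And>k. x0 $ k \<in> {-1/2, 1/2}"
  shows "\<exists>w\<in>E6_lat. w \<bullet> w = 2 \<and> \<bar>w \<bullet> x0\<bar> = 1 \<and> \<bar>w \<bullet> base_root\<bar> = 1"
proof -
  define \<sigma> \<tau> where "\<sigma> = 2 * x0 $ 0" and "\<tau> = 2 * x0 $ 2"
  have \<sigma>\<tau>: "\<sigma> \<in> {-1, 1}" "\<tau> \<in> {-1, 1}" using half[of 0] half[of 2] by (auto simp: \<sigma>_def \<tau>_def)
  have x0: "x0 $ 0 = \<sigma> / 2" "x0 $ 2 = \<tau> / 2" by (simp_all add: \<sigma>_def \<tau>_def)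
  define w where "w = vec8 \<sigma> 0 \<tau> 0 0 0 0 0"
  have "w \<in> E6_lat" "w \<bullet> w = 2" "\<bar>w \<bullet> x0\<bar> = 1" "\<bar>w \<bullet> base_root\<bar> = 1"
    using \<sigma>\<tau> by (auto simp: w_def x0 E6_lat_iff E8_lat_iff_int_vec base_root_vec8 vec8_simps inner_vec8_left)
  then show ?thesis by blast
qed

lemma axis_neighbour:
  assumes k: "k \<notin> {0, 1}" and c: "c \<in> {-1, 1}"
  defines "w \<equiv> axis 0 1 + c *\<^sub>R axis k 1 :: real^8"
  shows "w \<in> E8_lat" and "k \<notin> {6, 7} \<Longrightarrow> w \<in> E7_lat" and "k \<notin> {5, 6, 7} \<Longrightarrow> w \<in> E6_lat"
    and "w \<bullet> w = 2" and "w \<bullet> base_root = 1" and "w \<bullet> x = x $ 0 + c * x $ k"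
proof -
  have "int_vec w" using c by (auto simp: w_def intro!: int_vec_add int_vec_scaleR int_vec_axis)
  moreover have "coord_sum w / 2 \<in> \<int>" using c by (auto simp: w_def)
  ultimately show w: "w \<in> E8_lat" by (simp add: E8_lat_iff_int_vec)
  show "k \<notin> {6, 7} \<Longrightarrow> w \<in> E7_lat" "k \<notin> {5, 6, 7} \<Longrightarrow> w \<in> E6_lat"
    using w by (auto simp: E7_lat_iff E6_lat_iff w_def axis_def)
  show "w \<bullet> w = 2"
    using k c by (auto simp: w_def inner_add_left inner_add_right inner_axis_axis eq_commute[of 0 k])
  show "w \<bullet> base_root = 1" using k by (simp add: w_def inner_base_root axis_def)
  show "w \<bullet> x = x $ 0 + c * x $ k" by (simp add: w_def inner_add_left inner_axis')
qed

lemma E7_lat_common_neighbour: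
  assumes ij: "i \<noteq> j" "i \<in> {5, 6, 7}" "j \<in> {5, 6, 7}" and s: "s \<in> {-1, 1}" and t: "t \<in> {-1, 1}"
    and x0: "x0 = s *\<^sub>R axis i 1 + t *\<^sub>R axis j 1" "x0 \<in> E7_lat"
  shows "\<exists>w\<in>E7_lat. w \<bullet> w = 2 \<and> \<bar>w \<bullet> x0\<bar> = 1 \<and> \<bar>w \<bullet> base_root\<bar> = 1"
proof -
  have coord: "x0 $ k = (if k = i then s else 0) + (if k = j then t else 0)" for k
    by (simp add: x0(1) axis_def)
  have via: "\<exists>w\<in>E7_lat. w \<bullet> w = 2 \<and> \<bar>w \<bullet> x0\<bar> = 1 \<and> \<bar>w \<bullet> base_root\<bar> = 1"
    if "x0 $ 5 = c" "c \<in> {-1, 1}" for c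
  proof -
    have "(5::8) \<notin> {0, 1}" "(5::8) \<notin> {6, 7}" "x0 $ 0 = 0" using ij by (auto simp: coord)
    with axis_neighbour[OF this(1) that(2)] that show ?thesis by (intro bexI) auto
  qed
  consider "i = 5" | "j = 5" | "{i, j} = {6, 7}" using ij by auto
  then show ?thesis
  proof cases
    case 1
    then show ?thesis using via[of s] s ij by (simp add: coord)
  next
    case 2
    then show ?thesis using via[of t] t ij by (simp add: coord)
  next
    case 3
    \<comment> \<open>here \<open>x0 = s (\<epsilon>\<^sub>7 + \<epsilon>\<^sub>8)\<close>, and a half-integral root of \<open>E\<^sub>7\<close> is needed\<close>
    then have "x0 = vec8 0 0 0 0 0 0 s s"
      using x0(2) ij s t by (auto simp: x0(1) E7_lat_iff vec8_simps doubleton_eq_iff coord)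
    moreover define h where "h = vec8 (1/2) (1/2) (1/2) (1/2) (1/2) (1/2) (s/2) (s/2)"
    ultimately have "h \<in> E7_lat" "h \<bullet> h = 2" "\<bar>h \<bullet> x0\<bar> = 1" "\<bar>h \<bullet> base_root\<bar> = 1"
      using s by (auto simp: h_def E7_lat_iff E8_lat_iff_int_vec base_root_vec8 vec8_simps)
    then show ?thesis by blast
  qed
qed

lemma integral_root_common_neighbour:
  assumes L: "L \<in> {E8_lat, E7_lat, E6_lat}" and ij: "i \<noteq> j" "i \<notin> {0, 1}" "j \<notin> {0, 1}"
    and s: "s \<in> {-1, 1}" and t: "t \<in> {-1, 1}" and x0: "x0 = s *\<^sub>R axis i 1 + t *\<^sub>R axis j 1" "x0 \<in> L"
  shows "\<exists>w\<in>L. w \<bullet> w = 2 \<and> \<bar>w \<bullet> x0\<bar> = 1 \<and> \<bar>w \<bullet> base_root\<bar> = 1"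
proof -
  have coord: "x0 $ k = (if k = i then s else 0) + (if k = j then t else 0)" for k
    by (simp add: x0(1) axis_def)
  have E6_L: "E6_lat \<subseteq> L" using L E6_lat_subset_E7_lat E7_lat_subset_E8_lat by auto
  have x0_coords: "x0 $ 0 = 0" "x0 $ i = s" "x0 $ j = t" using ij by (simp_all add: coord)
  have via_i: ?thesis if "axis 0 1 + s *\<^sub>R axis i 1 \<in> L"
    using axis_neighbour(4,5)[OF ij(2) s] axis_neighbour(6)[OF ij(2) s, of x0] x0_coords s
    by (intro bexI[OF _ that]) auto
  have via_j: ?thesis if "axis 0 1 + t *\<^sub>R axis j 1 \<in> L"
    using axis_neighbour(4,5)[OF ij(3) t] axis_neighbour(6)[OF ij(3) t, of x0] x0_coords t
    by (intro bexI[OF _ that]) auto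
  consider "i \<notin> {5, 6, 7}" | "j \<notin> {5, 6, 7}" | "L = E8_lat" | "L = E7_lat" "i \<in> {5, 6, 7}" "j \<in> {5, 6, 7}"
    | "L = E6_lat" "i \<in> {5, 6, 7}" "j \<in> {5, 6, 7}"
    using L by blast
  then show ?thesis
  proof cases
    case 1
    then show ?thesis using via_i axis_neighbour(3)[OF ij(2) s] E6_L by blast
  next
    case 2
    then show ?thesis using via_j axis_neighbour(3)[OF ij(3) t] E6_L by blast
  next
    case 3
    then show ?thesis using via_i axis_neighbour(1)[OF ij(2) s] by blast
  next
    case 4
    then show ?thesis using E7_lat_common_neighbour[OF ij(1) _ _ s t] x0 by blast
  next
    case 5
    \<comment> \<open>a root of \<open>E\<^sub>6\<close> cannot have exactly two nonzero coordinates among the three equal ones\<close>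
    then have "x0 $ 5 = x0 $ 6" "x0 $ 6 = x0 $ 7" using x0(2) by (auto simp: E6_lat_iff)
    then show ?thesis using 5 ij s t by (auto simp: coord)
  qed
qed

lemma E_lattices_root_common_neighbour:
  assumes L: "L \<in> {E8_lat, E7_lat, E6_lat}" and x0: "x0 \<in> L" "x0 \<bullet> x0 = 2" "x0 \<bullet> base_root = 0"
  shows "\<exists>w\<in>L. w \<bullet> w = 2 \<and> \<bar>w \<bullet> x0\<bar> = 1 \<and> \<bar>w \<bullet> base_root\<bar> = 1"
proof -
  have E6_L: "E6_lat \<subseteq> L" and L_E8: "L \<subseteq> E8_lat"
    using L E6_lat_subset_E7_lat E7_lat_subset_E8_lat by auto
  have "x0 \<in> E8_lat" using x0(1) L_E8 by blast
  from this x0(2) show ?thesis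
  proof (cases rule: E8_lat_root_cases)
    case half
    then show ?thesis using half_root_common_neighbour E6_L by blast
  next
    case (integral i j s t)
    have coord: "x0 $ k = (if k = i then s else 0) + (if k = j then t else 0)" for k
      by (simp add: integral(4) axis_def)
    show ?thesis
    proof (cases "{i, j} \<inter> {0, 1} = {}")
      case True
      then have "i \<notin> {0, 1}" "j \<notin> {0, 1}" by auto
      then show ?thesis
        by (rule integral_root_common_neighbour[OF L integral(1) _ _ integral(2-4) x0(1)])
    next
      case False
      have "x0 $ 0 + x0 $ 1 = 0" using x0(3) by (simp add: inner_base_root)
      then have "{i, j} = {0, 1}" using False integral(1-3) by (auto simp: coord split: if_splits)
      then have "x0 $ 1 \<in> {-1, 1}" "x0 $ 2 = 0"
        using integral(1-3) by (auto simp: coord doubleton_eq_iff)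
      moreover define w where "w = vec8 0 1 1 0 0 0 0 0"
      ultimately have "w \<in> E6_lat" "w \<bullet> w = 2" "\<bar>w \<bullet> x0\<bar> = 1" "\<bar>w \<bullet> base_root\<bar> = 1"
        by (auto simp: w_def E6_lat_iff E8_lat_iff_int_vec base_root_vec8 vec8_simps inner_vec8_left)
      then show ?thesis using E6_L by blast
    qed
  qed
qed

lemma Eset_orthogonal_sublattice:
  assumes "x0 \<bullet> a = 0"
  shows "Eset {x \<in> L. x \<bullet> a = 0} x0 = {y \<in> Eset L x0. y \<bullet> a = 0}"
proof (intro equalityI subsetI)
  fix y assume "y \<in> {y \<in> Eset L x0. y \<bullet> a = 0}"
  then obtain z where y: "y \<in> L" "Nrm y = 6" "y \<bullet> a = 0" and z: "z \<in> L" "y - x0 = 2 *\<^sub>R z"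
    by (auto simp: Eset_def)
  have "2 * (z \<bullet> a) = (y - x0) \<bullet> a" by (simp add: z(2))
  then have "z \<bullet> a = 0" using y(3) assms by (simp add: inner_diff_left)
  then show "y \<in> Eset {x \<in> L. x \<bullet> a = 0} x0" using y z by (auto simp: Eset_def)
qed (auto simp: Eset_def)

lemma E8_lat_obtuse_roots_base_root:
  assumes z: "z \<in> obtuse_roots E8_lat base_root"
  obtains (integral) k c where "k \<notin> {0, 1}" "c \<in> {-1, 1}"
      "z = - axis 0 1 + c *\<^sub>R axis k 1 \<or> z = - axis 1 1 + c *\<^sub>R axis k 1"
    | (half) c2 c3 c4 c5 c6 c7 where "c2 \<in> {-1, 1}" "c3 \<in> {-1, 1}" "c4 \<in> {-1, 1}" "c5 \<in> {-1, 1}"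
      "c6 \<in> {-1, 1}" "c7 \<in> {-1, 1}" "(c2 + c3 + c4 + c5 + c6 + c7) / 4 - 1 / 2 \<in> \<int>"
      "z = vec8 (-1/2) (-1/2) (c2/2) (c3/2) (c4/2) (c5/2) (c6/2) (c7/2)"
proof -
  have z8: "z \<in> E8_lat" "z \<bullet> z = 2" and obtuse: "z \<bullet> base_root = -1" using z by (auto simp: obtuse_roots_def)
  from z8 show thesis
  proof (cases rule: E8_lat_root_cases)
    case (integral i j s t)
    then have "z \<in> D_lat"
      using z8(1) by (auto simp: E8_lat_iff_int_vec D_lat_iff intro!: int_vec_add int_vec_scaleR int_vec_axis)
    then have zD: "z \<in> obtuse_roots D_lat (1 *\<^sub>R axis 0 1 + 1 *\<^sub>R axis 1 1)"
      using z8 obtuse by (simp add: obtuse_roots_def base_root_def)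
    show thesis
      by (rule D_lat_obtuse_roots[OF _ _ _ zD]) (auto intro: that(1))
  next
    case half
    have "z $ 0 + z $ 1 = -1" using obtuse by (simp add: inner_base_root)
    then have "z $ 0 = -1/2" "z $ 1 = -1/2" using half[of 0] half[of 1] by auto
    then have z_eq: "z = vec8 (-1/2) (-1/2) (z$2) (z$3) (z$4) (z$5) (z$6) (z$7)"
      using vec8_eta[of z] by simp
    have "coord_sum z / 2 \<in> \<int>" using z8(1) by (simp add: E8_lat_iff_int_vec)
    moreover have "coord_sum z / 2 = (2*z$2 + 2*z$3 + 2*z$4 + 2*z$5 + 2*z$6 + 2*z$7) / 4 - 1/2"
      by (subst z_eq) (simp add: coord_sum_vec8 field_simps)
    ultimately have parity: "(2*z$2 + 2*z$3 + 2*z$4 + 2*z$5 + 2*z$6 + 2*z$7) / 4 - 1/2 \<in> \<int>" by simp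
    have signs: "2 * z $ k \<in> {-1, 1}" for k using half[of k] by auto
    have "2 * z $ k / 2 = z $ k" for k by simp
    then have z_half: "z = vec8 (-1/2) (-1/2) (2 * z $ 2 / 2) (2 * z $ 3 / 2) (2 * z $ 4 / 2) (2 * z $ 5 / 2)
        (2 * z $ 6 / 2) (2 * z $ 7 / 2)"
      by (simp only: z_eq[symmetric])
    show thesis
      by (rule that(2)[OF signs[of 2] signs[of 3] signs[of 4] signs[of 5] signs[of 6] signs[of 7] parity z_half])
  qed
qed

text \<open>One vector from each pair \<open>\<plusminus>y\<close> in \<open>E(\<epsilon>\<^sub>1 + \<epsilon>\<^sub>2)\<close>: the vectors \<open>\<epsilon>\<^sub>1 - \<epsilon>\<^sub>2 \<plusminus> 2\<epsilon>\<^sub>k\<close>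
  and the vectors \<open>(0, 0, 1, \<plusminus>1, \<dots>, \<plusminus>1)\<close> with an even number of minus signs.\<close>
definition E8_half_system :: "(real^8) set" where
  "E8_half_system =
    {vec8 1 (-1) 2 0 0 0 0 0, vec8 1 (-1) (-2) 0 0 0 0 0, vec8 1 (-1) 0 2 0 0 0 0, vec8 1 (-1) 0 (-2) 0 0 0 0,
     vec8 1 (-1) 0 0 2 0 0 0, vec8 1 (-1) 0 0 (-2) 0 0 0, vec8 1 (-1) 0 0 0 2 0 0, vec8 1 (-1) 0 0 0 (-2) 0 0,
     vec8 1 (-1) 0 0 0 0 2 0, vec8 1 (-1) 0 0 0 0 (-2) 0, vec8 1 (-1) 0 0 0 0 0 2, vec8 1 (-1) 0 0 0 0 0 (-2),
     vec8 0 0 1 1 1 1 1 1, vec8 0 0 1 1 1 1 (-1) (-1), vec8 0 0 1 1 1 (-1) 1 (-1), vec8 0 0 1 1 1 (-1) (-1) 1,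
     vec8 0 0 1 1 (-1) 1 1 (-1), vec8 0 0 1 1 (-1) 1 (-1) 1, vec8 0 0 1 1 (-1) (-1) 1 1,
     vec8 0 0 1 1 (-1) (-1) (-1) (-1), vec8 0 0 1 (-1) 1 1 1 (-1), vec8 0 0 1 (-1) 1 1 (-1) 1,
     vec8 0 0 1 (-1) 1 (-1) 1 1, vec8 0 0 1 (-1) 1 (-1) (-1) (-1), vec8 0 0 1 (-1) (-1) 1 1 1,
     vec8 0 0 1 (-1) (-1) 1 (-1) (-1), vec8 0 0 1 (-1) (-1) (-1) 1 (-1), vec8 0 0 1 (-1) (-1) (-1) (-1) 1}"

lemma not_Ints_odd_halves: "(1/2::real) \<notin> \<int>" "(3/2::real) \<notin> \<int>" "(5/2::real) \<notin> \<int>"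
  and minus_Ints_iff: "- (x::real) \<in> \<int> \<longleftrightarrow> x \<in> \<int>"
proof -
  have "(of_int m::real) \<noteq> of_int (2 * n + 1) / 2" for m n :: int
  proof
    assume "(of_int m::real) = of_int (2 * n + 1) / 2"
    then have "of_int (2 * m) = (of_int (2 * n + 1)::real)" by simp
    then have "2 * m = 2 * n + 1" by (simp only: of_int_eq_iff)
    then show False by presburger
  qed
  from this[of _ 0] this[of _ 1] this[of _ 2]
  show "(1/2::real) \<notin> \<int>" "(3/2::real) \<notin> \<int>" "(5/2::real) \<notin> \<int>"
    by (auto elim!: Ints_cases)
  show "- x \<in> \<int> \<longleftrightarrow> x \<in> \<int>" by (metis Ints_minus minus_minus)
qed

lemma E8_half_system_subset_Eset: "E8_half_system \<subseteq> Eset E8_lat base_root"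
proof -
  have "\<forall>y\<in>E8_half_system. (1/2) *\<^sub>R (y - base_root) \<in> obtuse_roots E8_lat base_root"
    by (simp add: E8_half_system_def base_root_vec8 obtuse_roots_def E8_lat_iff_int_vec vec8_simps)
  moreover have "y = base_root + 2 *\<^sub>R ((1/2) *\<^sub>R (y - base_root))" for y by simp
  ultimately show ?thesis
    unfolding Eset_eq_obtuse_roots[OF even_lattice_E8_lat base_root_root(1,4)] by blast
qed

lemma Eset_E8_lat_base_root: "Eset E8_lat base_root = E8_half_system \<union> uminus ` E8_half_system"
proof -
  have "y \<in> E8_half_system \<or> - y \<in> E8_half_system" if yE: "y \<in> Eset E8_lat base_root" for y
  proof -
    obtain z where z: "z \<in> obtuse_roots E8_lat base_root" and y: "y = base_root + 2 *\<^sub>R z"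
      using yE unfolding Eset_eq_obtuse_roots[OF even_lattice_E8_lat base_root_root(1,4)] by blast
    from z show ?thesis
    proof (cases rule: E8_lat_obtuse_roots_base_root)
      case (integral k c)
      then have "k = 2 \<or> k = 3 \<or> k = 4 \<or> k = 5 \<or> k = 6 \<or> k = 7" "c = -1 \<or> c = 1"
        using UNIV_8 by auto
      then show ?thesis using integral(3)
        unfolding y by (elim disjE) (simp_all add: E8_half_system_def base_root_vec8 vec8_simps)
    next
      case (half c2 c3 c4 c5 c6 c7)
      then have "c2 = -1 \<or> c2 = 1" "c3 = -1 \<or> c3 = 1" "c4 = -1 \<or> c4 = 1" "c5 = -1 \<or> c5 = 1"
        "c6 = -1 \<or> c6 = 1" "c7 = -1 \<or> c7 = 1"
        by auto
      then show ?thesis using half(7,8) unfolding y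
        by (elim disjE) (simp_all add: E8_half_system_def base_root_vec8 vec8_simps not_Ints_odd_halves minus_Ints_iff)
    qed
  qed
  then have "Eset E8_lat base_root \<subseteq> E8_half_system \<union> uminus ` E8_half_system"
    by (metis UnI1 UnI2 image_eqI minus_minus subsetI)
  moreover have "uminus ` E8_half_system \<subseteq> Eset E8_lat base_root"
    using E8_half_system_subset_Eset Eset_uminus[OF even_lattice_E8_lat base_root_root(1)] by blast
  ultimately show ?thesis using E8_half_system_subset_Eset by blast
qed

definition E7_half_system :: "(real^8) set" where
  "E7_half_system =
    {vec8 1 (-1) 2 0 0 0 0 0, vec8 1 (-1) (-2) 0 0 0 0 0, vec8 1 (-1) 0 2 0 0 0 0, vec8 1 (-1) 0 (-2) 0 0 0 0,
     vec8 1 (-1) 0 0 2 0 0 0, vec8 1 (-1) 0 0 (-2) 0 0 0, vec8 1 (-1) 0 0 0 2 0 0, vec8 1 (-1) 0 0 0 (-2) 0 0,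
     vec8 0 0 1 1 1 1 1 1, vec8 0 0 1 1 1 1 (-1) (-1), vec8 0 0 1 1 (-1) (-1) 1 1,
     vec8 0 0 1 1 (-1) (-1) (-1) (-1), vec8 0 0 1 (-1) 1 (-1) 1 1, vec8 0 0 1 (-1) 1 (-1) (-1) (-1),
     vec8 0 0 1 (-1) (-1) 1 1 1, vec8 0 0 1 (-1) (-1) 1 (-1) (-1)}"

definition E6_half_system :: "(real^8) set" where
  "E6_half_system =
    {vec8 1 (-1) 2 0 0 0 0 0, vec8 1 (-1) (-2) 0 0 0 0 0, vec8 1 (-1) 0 2 0 0 0 0, vec8 1 (-1) 0 (-2) 0 0 0 0,
     vec8 1 (-1) 0 0 2 0 0 0, vec8 1 (-1) 0 0 (-2) 0 0 0, vec8 0 0 1 1 1 1 1 1,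
     vec8 0 0 1 1 (-1) (-1) (-1) (-1), vec8 0 0 1 (-1) 1 (-1) (-1) (-1), vec8 0 0 1 (-1) (-1) 1 1 1}"

lemma E7_half_system_eq: "E7_half_system = {y \<in> E8_half_system. y \<bullet> (axis 6 1 - axis 7 1) = 0}"
  unfolding E7_half_system_def E8_half_system_def by (auto simp: vec8_simps)

lemma E6_half_system_eq: "E6_half_system = {y \<in> E7_half_system. y \<bullet> (axis 5 1 - axis 6 1) = 0}"
  unfolding E7_half_system_def E6_half_system_def by (auto simp: vec8_simps)

lemma Eset_E7_lat_base_root: "Eset E7_lat base_root = E7_half_system \<union> uminus ` E7_half_system"
proof -
  have "Eset E7_lat base_root = {y \<in> Eset E8_lat base_root. y \<bullet> (axis 6 1 - axis 7 1) = 0}"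
    unfolding E7_lat_def by (rule Eset_orthogonal_sublattice) (simp add: base_root_vec8 vec8_simps)
  also have "\<dots> = {y \<in> E8_half_system. y \<bullet> (axis 6 1 - axis 7 1) = 0} \<union> uminus ` {y \<in> E8_half_system. y \<bullet> (axis 6 1 - axis 7 1) = 0}"
    unfolding Eset_E8_lat_base_root by (rule half_system_filter) (simp add: inner_minus_left)
  finally show ?thesis unfolding E7_half_system_eq .
qed

lemma Eset_E6_lat_base_root: "Eset E6_lat base_root = E6_half_system \<union> uminus ` E6_half_system"
proof -
  have "Eset E6_lat base_root = {y \<in> Eset E7_lat base_root. y \<bullet> (axis 5 1 - axis 6 1) = 0}"
    unfolding E6_lat_def by (rule Eset_orthogonal_sublattice) (simp add: base_root_vec8 vec8_simps)
  also have "\<dots> = {y \<in> E7_half_system. y \<bullet> (axis 5 1 - axis 6 1) = 0} \<union> uminus ` {y \<in> E7_half_system. y \<bullet> (axis 5 1 - axis 6 1) = 0}"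
    unfolding Eset_E7_lat_base_root by (rule half_system_filter) (simp add: inner_minus_left)
  finally show ?thesis unfolding E6_half_system_eq .
qed

lemma E6_half_system_subset: "E6_half_system \<subseteq> E7_half_system" "E7_half_system \<subseteq> E8_half_system"
  by (auto simp: E6_half_system_eq E7_half_system_eq)

lemma E8_half_system_memberD: "y \<in> E8_half_system \<Longrightarrow> y \<bullet> y = 6 \<and> (y $ 0 = 1 \<or> y $ 0 = 0 \<and> y $ 2 = 1)"
  by (auto simp: E8_half_system_def vec8_simps)

definition E8_basis :: "(real^8) set" where
  "E8_basis = {vec8 1 (-1) 0 0 0 0 0 0, vec8 0 0 1 0 0 0 0 0, vec8 0 0 0 1 0 0 0 0, vec8 0 0 0 0 1 0 0 0,
               vec8 0 0 0 0 0 1 0 0, vec8 0 0 0 0 0 0 1 0, vec8 0 0 0 0 0 0 0 1}"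

definition E7_basis :: "(real^8) set" where
  "E7_basis = {vec8 1 (-1) 0 0 0 0 0 0, vec8 0 0 1 0 0 0 0 0, vec8 0 0 0 1 0 0 0 0, vec8 0 0 0 0 1 0 0 0,
               vec8 0 0 0 0 0 1 0 0, vec8 0 0 0 0 0 0 1 1}"

definition E6_basis :: "(real^8) set" where
  "E6_basis = {vec8 1 (-1) 0 0 0 0 0 0, vec8 0 0 1 0 0 0 0 0, vec8 0 0 0 1 0 0 0 0, vec8 0 0 0 0 1 0 0 0,
               vec8 0 0 0 0 0 1 1 1}"

lemma E_bases_independent: "independent E8_basis" "independent E7_basis" "independent E6_basis"
  by (rule pairwise_orthogonal_independent;
      auto simp: E8_basis_def E7_basis_def E6_basis_def pairwise_insert orthogonal_def vec8_simps vec8_zero)+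

lemma card_E_bases: "card E8_basis = 7" "card E7_basis = 6" "card E6_basis = 5"
  by (simp_all add: E8_basis_def E7_basis_def E6_basis_def vec8_simps)

lemma in_span_E_bases:
  assumes "x $ 0 + x $ 1 = 0"
  shows "x \<in> span E8_basis" and "x $ 6 = x $ 7 \<Longrightarrow> x \<in> span E7_basis"
    and "x $ 5 = x $ 6 \<Longrightarrow> x $ 6 = x $ 7 \<Longrightarrow> x \<in> span E6_basis"
proof -
  have "x $ 1 = - x $ 0" using assms by simp
  then have x: "x = vec8 (x$0) (- x$0) (x$2) (x$3) (x$4) (x$5) (x$6) (x$7)"
    by (simp add: vec_eq_iff forall_8)
  have "x = (x$0) *\<^sub>R vec8 1 (-1) 0 0 0 0 0 0 + (x$2) *\<^sub>R vec8 0 0 1 0 0 0 0 0 + (x$3) *\<^sub>R vec8 0 0 0 1 0 0 0 0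
      + (x$4) *\<^sub>R vec8 0 0 0 0 1 0 0 0 + (x$5) *\<^sub>R vec8 0 0 0 0 0 1 0 0 + (x$6) *\<^sub>R vec8 0 0 0 0 0 0 1 0
      + (x$7) *\<^sub>R vec8 0 0 0 0 0 0 0 1"
    by (subst x) (simp add: vec8_simps)
  also have "\<dots> \<in> span E8_basis"
    by (intro span_add span_scale span_base) (simp_all add: E8_basis_def)
  finally show "x \<in> span E8_basis" .
  show "x \<in> span E7_basis" if "x $ 6 = x $ 7"
  proof -
    have "x = (x$0) *\<^sub>R vec8 1 (-1) 0 0 0 0 0 0 + (x$2) *\<^sub>R vec8 0 0 1 0 0 0 0 0
        + (x$3) *\<^sub>R vec8 0 0 0 1 0 0 0 0 + (x$4) *\<^sub>R vec8 0 0 0 0 1 0 0 0 + (x$5) *\<^sub>R vec8 0 0 0 0 0 1 0 0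
        + (x$6) *\<^sub>R vec8 0 0 0 0 0 0 1 1"
      using that by (subst x) (simp add: vec8_simps)
    also have "\<dots> \<in> span E7_basis"
      by (intro span_add span_scale span_base) (simp_all add: E7_basis_def)
    finally show ?thesis .
  qed
  show "x \<in> span E6_basis" if "x $ 5 = x $ 6" "x $ 6 = x $ 7"
  proof -
    have "x = (x$0) *\<^sub>R vec8 1 (-1) 0 0 0 0 0 0 + (x$2) *\<^sub>R vec8 0 0 1 0 0 0 0 0
        + (x$3) *\<^sub>R vec8 0 0 0 1 0 0 0 0 + (x$4) *\<^sub>R vec8 0 0 0 0 1 0 0 0 + (x$5) *\<^sub>R vec8 0 0 0 0 0 1 1 1"
      using that by (subst x) (simp add: vec8_simps)
    also have "\<dots> \<in> span E6_basis"
      by (intro span_add span_scale span_base) (simp_all add: E6_basis_def)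
    finally show ?thesis .
  qed
qed

lemma E_bases_subset_span: "E6_basis \<subseteq> span E6_half_system"
  "E7_basis \<subseteq> span E7_half_system" "E8_basis \<subseteq> span E8_half_system"
proof -
  let ?d = "vec8 1 (-1) 0 0 0 0 0 0" and ?u = "vec8 0 0 1 1 1 1 1 1"
  have axis: "axis k 1 \<in> span P" if "?d + 2 *\<^sub>R axis k 1 \<in> P" "?d - 2 *\<^sub>R axis k 1 \<in> P" for k P
    using span_scale[OF in_span_if_add_diff_in(2)[OF that], of "1/2"] by simp
  have d: "?d \<in> span E6_half_system"
    by (rule in_span_if_add_diff_in(1)[of _ "2 *\<^sub>R axis 2 1"]) (simp_all add: E6_half_system_def vec8_simps)
  have a6: "axis 2 1 \<in> span E6_half_system" "axis 3 1 \<in> span E6_half_system"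
    "axis 4 1 \<in> span E6_half_system"
    by (rule axis; simp add: E6_half_system_def vec8_simps)+
  have u: "?u \<in> span E6_half_system" by (simp add: span_base E6_half_system_def)
  have a7: "axis 5 1 \<in> span E7_half_system" by (rule axis) (simp_all add: E7_half_system_def vec8_simps)
  have a8: "axis 6 1 \<in> span E8_half_system" "axis 7 1 \<in> span E8_half_system"
    by (rule axis; simp add: E8_half_system_def vec8_simps)+
  have mono: "span E6_half_system \<subseteq> span E7_half_system" "span E7_half_system \<subseteq> span E8_half_system"
    using E6_half_system_subset by (simp_all add: span_mono)
  have "?u - axis 2 1 - axis 3 1 - axis 4 1 \<in> span E6_half_system"
    using u a6 by (simp add: span_diff)
  then show "E6_basis \<subseteq> span E6_half_system"
    using d a6 by (simp add: E6_basis_def axis_8 vec8_simps)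
  have d7: "?d \<in> span E7_half_system" and u7: "?u \<in> span E7_half_system"
    and a67: "axis 2 1 \<in> span E7_half_system" "axis 3 1 \<in> span E7_half_system"
      "axis 4 1 \<in> span E7_half_system"
    using d u a6 mono(1) by blast+
  have "?u - axis 2 1 - axis 3 1 - axis 4 1 - axis 5 1 \<in> span E7_half_system"
    using u7 a67 a7 by (simp add: span_diff)
  then show "E7_basis \<subseteq> span E7_half_system"
    using d7 a67 a7 by (simp add: E7_basis_def axis_8 vec8_simps)
  have "?d \<in> span E8_half_system" "axis 2 1 \<in> span E8_half_system" "axis 3 1 \<in> span E8_half_system"
    "axis 4 1 \<in> span E8_half_system" "axis 5 1 \<in> span E8_half_system"
    using d7 a67 a7 mono(2) by blast+
  then show "E8_basis \<subseteq> span E8_half_system"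
    using a8 by (simp add: E8_basis_def axis_8 vec8_simps)
qed

lemma span_E_half_systems: "span E8_half_system = span E8_basis"
  "span E7_half_system = span E7_basis" "span E6_half_system = span E6_basis"
proof -
  have "E8_half_system \<subseteq> span E8_basis" "E7_half_system \<subseteq> span E7_basis"
    "E6_half_system \<subseteq> span E6_basis"
    by (auto intro!: in_span_E_bases simp: E8_half_system_def E7_half_system_def E6_half_system_def)
  then show "span E8_half_system = span E8_basis"
    "span E7_half_system = span E7_basis" "span E6_half_system = span E6_basis"
    using E_bases_subset_span by (simp_all add: span_eq)
qed

lemma finite_E_half_systems: "finite E8_half_system" "finite E7_half_system" "finite E6_half_system"
  and card_E_half_systems: "card E8_half_system = 28" "card E7_half_system = 16" "card E6_half_system = 10"
  by (simp_all add: E8_half_system_def E7_half_system_def E6_half_system_def vec8_simps)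

lemma Eset_invariants_E_lattices_base_root:
  "Eset_invariants E8_lat base_root = (7, 28)"
  "Eset_invariants E7_lat base_root = (6, 16)"
  "Eset_invariants E6_lat base_root = (5, 10)"
proof -
  have half_system: "y \<bullet> y = 6" "- y \<notin> P" if y: "y \<in> P" and P: "P \<subseteq> E8_half_system" for y P
  proof -
    have "z $ 0 > 0 \<or> z $ 0 = 0 \<and> z $ 2 > 0" if "z \<in> P" for z
      using E8_half_system_memberD[of z] that P by auto
    then show "- y \<notin> P" using y by (rule no_antipodes_if_leading_coord_positive)
    show "y \<bullet> y = 6" using E8_half_system_memberD[of y] y P by auto
  qed
  note P7 = E6_half_system_subset(2) and P6 = order_trans[OF E6_half_system_subset]
  show "Eset_invariants E8_lat base_root = (7, 28)"
    using Eset_invariants_half_system[OF Eset_E8_lat_base_root finite_E_half_systems(1)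
        half_system[OF _ order_refl] E_bases_independent(1) span_E_half_systems(1)[symmetric]]
    by (simp add: card_E_bases card_E_half_systems)
  show "Eset_invariants E7_lat base_root = (6, 16)"
    using Eset_invariants_half_system[OF Eset_E7_lat_base_root finite_E_half_systems(2)
        half_system[OF _ P7] E_bases_independent(2) span_E_half_systems(2)[symmetric]]
    by (simp add: card_E_bases card_E_half_systems)
  show "Eset_invariants E6_lat base_root = (5, 10)"
    using Eset_invariants_half_system[OF Eset_E6_lat_base_root finite_E_half_systems(3)
        half_system[OF _ P6] E_bases_independent(3) span_E_half_systems(3)[symmetric]]
    by (simp add: card_E_bases card_E_half_systems)
qed

lemma prop_holds_E_lattice:
  assumes L: "L \<in> {E8_lat, E7_lat, E6_lat}" and base: "Eset_invariants L base_root = (r, t)"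
  shows "prop_holds L r t"
proof -
  have ev: "even_lattice L" using L even_lattice_E8_lat even_lattice_E7_lat even_lattice_E6_lat by auto
  have b: "base_root \<in> L" using L base_root_root by auto
  have "Eset_invariants L x0 = (r, t)" if x0: "x0 \<in> L" "x0 \<bullet> x0 = 2" for x0
  proof -
    have "base_root \<bullet> x0 = 0 \<Longrightarrow> \<exists>w\<in>L. w \<bullet> w = 2 \<and> \<bar>w \<bullet> base_root\<bar> = 1 \<and> \<bar>w \<bullet> x0\<bar> = 1"
      using E_lattices_root_common_neighbour[OF L x0] by (auto simp: inner_commute)
    then show ?thesis using Eset_invariants_eq_roots[OF ev b base_root_root(4) x0] base by simp
  qed
  then show ?thesis by (simp add: prop_holds_iff_Eset_invariants[OF ev])
qed

theorem proposition2p1: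
  shows "(CARD('a::finite) \<ge> 2 \<longrightarrow>
            (let n = CARD('a) - 1; r = n - 1 in prop_holds (A_lat :: (real^'a) set) r r))
       \<and> (CARD('b::finite) \<ge> 4 \<longrightarrow>
            (let n = CARD('b); r = n - 1 in prop_holds (D_lat :: (real^'b) set) r (2 * r - 2)))
       \<and> prop_holds E8_lat 7 28
       \<and> prop_holds E7_lat 6 16
       \<and> prop_holds E6_lat 5 10"
proof (intro conjI impI)
  show "let n = CARD('a) - 1; r = n - 1 in prop_holds (A_lat :: (real^'a) set) r r"
    using prop_holds_A_lat[where 'm = 'a] by (simp add: Let_def numeral_2_eq_2)
  assume "CARD('b) \<ge> 4"
  moreover have "2 * (CARD('b) - 1) - 2 = 2 * (CARD('b) - 2)" by simp
  ultimately show "let n = CARD('b); r = n - 1 in prop_holds (D_lat :: (real^'b) set) r (2 * r - 2)"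
    using prop_holds_D_lat[where 'm = 'b] by (simp add: Let_def)
qed (auto intro: prop_holds_E_lattice simp: Eset_invariants_E_lattices_base_root)

end
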